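(* For every $n\ge 0$ one has $\theta(\mathbf{Sym}_n)=\mathcal{P}_n$. Consequently $\mathcal{P}=\bigoplus_{n\ge0}\mathcal{P}_n=\theta(\mathbf{Sym})$ is a graded Hopf subalgebra of $\mathbf{Sym}$ (closed under product and coproduct and containing $1$). Moreover $\dim\mathcal{P}_n=f_n$, where $f_0=f_1=f_2=1$ and $f_{n+2}=f_{n+1}+f_n$; for $n\ge1$ this equals the number of compositions of $n$ into odd parts.
   Context: $\mathbf{Sym}$ denotes the algebra of noncommutative symmetric functions over $\mathbb{Q}$: the free associative algebra on generators $S_1,S_2,\dots$ with $S_0=1$ and $\deg S_n=n$. It is a graded Hopf algebra with coproduct $\Delta S_n=\sum_{i+j=n}S_i\otimes S_j$, and $\mathbf{Sym}_n$ is its degree-$n$ component. For a composition $I=(i_1,\dots,i_r)$ of $n$, set $S^I=S_{i_1}\cdots S_{i_r}$ and $\operatorname{Des}(I)=\{i_1,i_1+i_2,\dots,i_1+\cdots+i_{r-1}\}\subseteq[1,n-1]$. The ribbon functions $R_J$ are defined by $S^I=\sum_{J\models n,\ \operatorname{Des}(J)\subseteq\operatorname{Des}(I)}R_J$, and $\Lambda_n=R_{(1^n)}$ with $\Lambda_0=1$. The peak set of a composition $J$ of $n$ is $HP(J)=\{a\in\operatorname{Des}(J): a\neq 1,\ a-1\notin\operatorname{Des}(J)\}\subseteq[2,n-1]$. A subset $P\subseteq[2,n-1]$ is a peak set if $a\in P$ implies $a-1\notin P$. For such $P$, the peak class is $\Pi_P=\sum_{J\models n,\ HP(J)=P}R_J$,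 and $\mathcal{P}_n$ is the linear span of all $\Pi_P$ with $P$ a peak set in $[2,n-1]$. Let $\theta:\mathbf{Sym}\to\mathbf{Sym}$ be the algebra endomorphism defined by $\theta(S_n)=\tilde S_n:=\sum_{k=0}^{n}\Lambda_kS_{n-k}$; this is the $(1-q)$-transform $F(A)\mapsto F((1-q)A)$ specialized at $q=-1$. *)

theory Defs
  imports Complex_Main "HOL-Library.Function_Algebras"
begin

text \<open>An element of Sym is encoded by its
coefficient function F :: nat list => rat in the basis S^I (I a composition):
F represents sum_I F(I) S^I. Elements of Sym (x) Sym are encoded likewise in the basis
S^I (x) S^J, by functions (nat list * nat list) => rat.\<close>

type_synonym sym = "nat list \<Rightarrow> rat"
type_synonym sym2 = "nat list \<times> nat list \<Rightarrow> rat"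

definition comps :: "nat \<Rightarrow> nat list set" where
  "comps n = {I. sum_list I = n \<and> 0 \<notin> set I}"

definition Sym :: "sym set" where
  "Sym = {F. finite {I. F I \<noteq> 0} \<and> (\<forall>I. F I \<noteq> 0 \<longrightarrow> 0 \<notin> set I)}"

definition Sym_deg :: "nat \<Rightarrow> sym set" where
  "Sym_deg n = {F. \<forall>I. F I \<noteq> 0 \<longrightarrow> I \<in> comps n}"

definition hom_comp :: "nat \<Rightarrow> sym \<Rightarrow> sym" where
  "hom_comp n F = (\<lambda>I. if sum_list I = n then F I else 0)"

definition scaleS :: "rat \<Rightarrow> sym \<Rightarrow> sym" where
  "scaleS c F = (\<lambda>I. c * F I)"

definition scaleT :: "rat \<Rightarrow> sym2 \<Rightarrow> sym2" where
  "scaleT c F = (\<lambda>x. c * F x)"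

definition SI :: "nat list \<Rightarrow> sym" where
  "SI I = (\<lambda>J. if J = I then 1 else 0)"

definition one_sym :: sym where
  "one_sym = SI []"

definition Sn :: "nat \<Rightarrow> sym" where
  "Sn m = (if m = 0 then SI [] else SI [m])"

text \<open>product: bilinear extension of S^I S^J = S^(I@J)\<close>
definition mult :: "sym \<Rightarrow> sym \<Rightarrow> sym" where
  "mult F G = (\<lambda>K. \<Sum>i\<le>length K. F (take i K) * G (drop i K))"

definition Des :: "nat list \<Rightarrow> nat set" where
  "Des J = {sum_list (take i J) | i. 0 < i \<and> i < length J}"

text \<open>Ribbon functions, defined by solving the unitriangular system
  S^J = sum_{J' |= |J|, Des J' \<subseteq> Des J} R_J'
  recursively: R_J = S^J - sum_{Des J' strictly contained in Des J} R_J'.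
  (Des J' strictly contained in Des J forces length J' < length J, so fuel length J suffices.)\<close>
primrec ribbon_aux :: "nat \<Rightarrow> nat list \<Rightarrow> sym" where
  "ribbon_aux 0 J = SI J"
| "ribbon_aux (Suc k) J =
     SI J - (\<Sum>J'\<in>{J'\<in>comps (sum_list J). Des J' \<subset> Des J}. ribbon_aux k J')"

definition ribbon :: "nat list \<Rightarrow> sym" where
  "ribbon J = ribbon_aux (length J) J"

definition Lambda :: "nat \<Rightarrow> sym" where
  "Lambda k = ribbon (replicate k 1)"

definition tildeS :: "nat \<Rightarrow> sym" where
  "tildeS n = (\<Sum>k\<le>n. mult (Lambda k) (Sn (n - k)))"

definition thetaS :: "nat list \<Rightarrow> sym" where
  "thetaS I = foldr (\<lambda>i acc. mult (tildeS i) acc) I one_sym"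

text \<open>theta: the algebra endomorphism with S_n |-> tildeS_n, extended linearly\<close>
definition theta :: "sym \<Rightarrow> sym" where
  "theta F = (\<Sum>I\<in>{I. F I \<noteq> 0}. scaleS (F I) (thetaS I))"

definition HP :: "nat list \<Rightarrow> nat set" where
  "HP J = {a \<in> Des J. a \<noteq> 1 \<and> a - 1 \<notin> Des J}"

definition peak_sets :: "nat \<Rightarrow> nat set set" where
  "peak_sets n = {P. P \<subseteq> {2..n-1} \<and> (\<forall>a\<in>P. a - 1 \<notin> P)}"

definition Pi_class :: "nat \<Rightarrow> nat set \<Rightarrow> sym" where
  "Pi_class n P = (\<Sum>J\<in>{J \<in> comps n. HP J = P}. ribbon J)"

definition Pspace :: "nat \<Rightarrow> sym set" where
  "Pspace n = module.span scaleS (Pi_class n ` peak_sets n)"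

definition Pall :: "sym set" where
  "Pall = {F \<in> Sym. \<forall>n. hom_comp n F \<in> Pspace n}"

definition tensor :: "sym \<Rightarrow> sym \<Rightarrow> sym2" where
  "tensor u v = (\<lambda>(A, B). u A * v B)"

definition tmult :: "sym2 \<Rightarrow> sym2 \<Rightarrow> sym2" where
  "tmult F G = (\<lambda>(A, B). \<Sum>i\<le>length A. \<Sum>j\<le>length B.
      F (take i A, take j B) * G (drop i A, drop j B))"

primrec DeltaS :: "nat list \<Rightarrow> sym2" where
  "DeltaS [] = tensor one_sym one_sym"
| "DeltaS (i # I) = tmult (\<Sum>a\<le>i. tensor (Sn a) (Sn (i - a))) (DeltaS I)"

definition Delta :: "sym \<Rightarrow> sym2" where
  "Delta F = (\<Sum>I\<in>{I. F I \<noteq> 0}. scaleT (F I) (DeltaS I))"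

definition tensor_sq :: "sym set \<Rightarrow> sym2 set" where
  "tensor_sq V = module.span scaleT {tensor u v | u v. u \<in> V \<and> v \<in> V}"

fun fib_f :: "nat \<Rightarrow> nat" where
  "fib_f 0 = 1"
| "fib_f (Suc 0) = 1"
| "fib_f (Suc (Suc 0)) = 1"
| "fib_f (Suc (Suc (Suc n))) = fib_f (Suc (Suc n)) + fib_f (Suc n)"

end

theory Submission
  imports Defs
begin

lemma sum_fun_apply: "sum f A x = (\<Sum>i\<in>A. f i x)"
  by (induct A rule: infinite_finite_induct) auto

section \<open>Compositions and descent sets\<close>

lemma length_le_sum_list: "0 \<notin> set I \<Longrightarrow> length I \<le> sum_list (I :: nat list)"
proof (induct I)
  case (Cons a I) then show ?case by (cases a) auto
qed auto

lemma finite_comps: "finite (comps n)"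
proof (rule finite_subset)
  show "comps n \<subseteq> {xs. set xs \<subseteq> {..n} \<and> length xs \<le> n}"
    using length_le_sum_list member_le_sum_list by (fastforce simp: comps_def)
  show "finite {xs. set xs \<subseteq> {..n} \<and> length xs \<le> n}"
    by (rule finite_lists_length_le) auto
qed

lemma comps_Nil_iff: "I \<in> comps n \<Longrightarrow> I = [] \<longleftrightarrow> n = 0"
  by (cases I) (auto simp: comps_def)

lemma comps_0: "comps 0 = {[]}"
  using comps_Nil_iff by (auto simp: comps_def)

lemma Cons_in_comps_iff: "a # I \<in> comps n \<longleftrightarrow> 0 < a \<and> a \<le> n \<and> I \<in> comps (n - a)"
  by (auto simp: comps_def)

lemma append_in_comps: "I \<in> comps m \<Longrightarrow> J \<in> comps k \<Longrightarrow> I @ J \<in> comps (m + k)"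
  by (auto simp: comps_def)

lemma Des_Nil [simp]: "Des [] = {}"
  by (simp add: Des_def)

lemma Des_Cons: "Des (a # J) = (if J = [] then {} else insert a ((+) a ` Des J))"
proof -
  have "Des (a # J) = {a + sum_list (take j J) | j. j < length J}"
    unfolding Des_def
  proof (intro set_eqI iffI)
    fix x assume "x \<in> {sum_list (take i (a # J)) |i. 0 < i \<and> i < length (a # J)}"
    then obtain j where "x = sum_list (take (Suc j) (a # J))" "j < length J"
      by (auto simp: gr0_conv_Suc)
    then show "x \<in> {a + sum_list (take j J) |j. j < length J}" by auto
  next
    fix x assume "x \<in> {a + sum_list (take j J) |j. j < length J}"
    then obtain j where "x = a + sum_list (take j J)" "j < length J" by blast
    then show "x \<in> {sum_list (take i (a # J)) |i. 0 < i \<and> i < length (a # J)}"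
      by (intro CollectI exI[of _ "Suc j"]) auto
  qed
  also have "\<dots> = (if J = [] then {} else insert a ((+) a ` Des J))"
  proof (cases "J = []")
    case False
    have "{a + sum_list (take j J) | j. j < length J} = (\<lambda>j. a + sum_list (take j J)) ` {..<length J}"
      by auto
    also have "{..<length J} = insert 0 {i. 0 < i \<and> i < length J}"
      using False by auto
    finally show ?thesis
      using False by (simp add: Des_def image_image) (auto simp: image_iff)
  qed simp
  finally show ?thesis .
qed

lemma Des_append:
  "Des (I @ J) = Des I \<union> (+) (sum_list I) ` Des J \<union> (if I \<noteq> [] \<and> J \<noteq> [] then {sum_list I} else {})"
proof (induct I)
  case (Cons a I)
  then show ?case
    by (cases "I = []") (auto simp: Des_Cons image_Un image_image add.assoc)
qed simp

lemma Des_subset: "I \<in> comps n \<Longrightarrow> Des I \<subseteq> {1..<n}"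
proof (induct I arbitrary: n)
  case (Cons a I)
  then show ?case
    by (cases "I = []") (auto simp: Des_Cons Cons_in_comps_iff comps_Nil_iff, fastforce+)
qed simp

lemma finite_Des [simp]: "finite (Des I)"
  by (induct I) (simp_all add: Des_Cons)

lemma card_Des: "I \<in> comps n \<Longrightarrow> card (Des I) = length I - 1"
proof (induct I arbitrary: n)
  case (Cons a I)
  show ?case
  proof (cases "I = []")
    case False
    with Cons have "a \<notin> (+) a ` Des I" "length I \<noteq> 0"
      using Des_subset[of I "n - a"] by (auto simp: Cons_in_comps_iff)
    moreover have "card (Des I) = length I - 1"
      using Cons by (auto simp: Cons_in_comps_iff)
    ultimately show ?thesis
      using False by (simp add: Des_Cons card_image)
  qed (simp add: Des_Cons)
qed simp

lemma Des_inj: "I \<in> comps n \<Longrightarrow> J \<in> comps n \<Longrightarrow> Des I = Des J \<Longrightarrow> I = J"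
proof (induct I arbitrary: J n)
  case Nil then show ?case using comps_0 comps_Nil_iff by auto
next
  case (Cons a I)
  have "J \<noteq> []"
    using Cons.prems(1,2) comps_Nil_iff[of "a # I" n] comps_Nil_iff[of J n] by simp
  then obtain b J' where J: "J = b # J'"
    by (cases J) auto
  show ?case
  proof (cases "I = []")
    case True
    then have "J' = []" using Cons.prems J by (simp add: Des_Cons split: if_splits)
    then show ?thesis using True J Cons.prems(1,2) by (simp add: comps_def)
  next
    case False
    then have "J' \<noteq> []" using Cons.prems J by (auto simp: Des_Cons split: if_splits)
    have I0: "0 \<notin> Des I" and J0: "0 \<notin> Des J'"
      using Des_subset[of I "n - a"] Des_subset[of J' "n - b"] Cons.prems J
      by (auto simp: Cons_in_comps_iff)
    have eq: "insert a ((+) a ` Des I) = insert b ((+) b ` Des J')"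
      using Cons.prems J False \<open>J' \<noteq> []\<close> by (simp add: Des_Cons)
    have "a = b"
    proof (rule ccontr)
      assume "a \<noteq> b"
      have "a \<in> insert b ((+) b ` Des J')" "b \<in> insert a ((+) a ` Des I)"
        using eq by blast+
      then have "a \<in> (+) b ` Des J'" "b \<in> (+) a ` Des I"
        using \<open>a \<noteq> b\<close> by auto
      then show False using I0 J0 by auto
    qed
    have "a \<notin> (+) a ` Des I" "a \<notin> (+) a ` Des J'" using I0 J0 by auto
    from insert_ident[OF this] have "(+) a ` Des I = (+) a ` Des J'"
      using eq \<open>a = b\<close> by simp
    then have "Des I = Des J'" by (simp add: inj_image_eq_iff)
    moreover have "I \<in> comps (n - a)" "J' \<in> comps (n - a)"
      using Cons.prems J \<open>a = b\<close> by (auto simp: Cons_in_comps_iff)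
    ultimately show ?thesis using Cons.hyps J \<open>a = b\<close> by blast
  qed
qed

text \<open>Conversely every subset of \<open>{1..<n}\<close> is a descent set: peel off its minimum.\<close>

lemma Des_surj: "D \<subseteq> {1..<n} \<Longrightarrow> \<exists>J\<in>comps n. Des J = D"
proof (induct n arbitrary: D rule: less_induct)
  case (less n)
  show ?case
  proof (cases "D = {}")
    case True
    show ?thesis
    proof (cases "n = 0")
      case False
      then have "[n] \<in> comps n" by (simp add: comps_def)
      then show ?thesis using \<open>D = {}\<close> by (intro bexI[of _ "[n]"]) (simp_all add: Des_Cons)
    qed (use \<open>D = {}\<close> comps_0 in auto)
  next
    case False
    have fin: "finite D" using less.prems finite_subset by blast
    define a where "a = Min D"
    define D' where "D' = (\<lambda>x. x - a) ` (D - {a})"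
    have aD: "a \<in> D" and amin: "\<And>x. x \<in> D \<Longrightarrow> a \<le> x"
      using False fin by (auto simp: a_def)
    have a: "1 \<le> a" "a < n" using aD less.prems by auto
    have "D' \<subseteq> {1..<n - a}"
      unfolding D'_def using less.prems amin by force
    then obtain J where J: "J \<in> comps (n - a)" "Des J = D'"
      using less.hyps[of "n - a"] a by auto
    have "J \<noteq> []" using J a comps_Nil_iff by auto
    moreover have "(+) a ` D' = D - {a}"
      unfolding D'_def image_image using amin by (force simp: image_iff)
    ultimately have "Des (a # J) = D" using J aD by (auto simp: Des_Cons)
    moreover have "a # J \<in> comps n" using J a by (auto simp: Cons_in_comps_iff)
    ultimately show ?thesis by blast
  qed
qed

interpretation VS: vector_space scaleS
  by unfold_locales (auto simp: scaleS_def fun_eq_iff algebra_simps)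

interpretation VT: vector_space scaleT
  by unfold_locales (auto simp: scaleT_def fun_eq_iff algebra_simps)

abbreviation finsupp :: "('a \<Rightarrow> rat) \<Rightarrow> bool" where
  "finsupp F \<equiv> finite {x. F x \<noteq> 0}"

lemma Sym_deg_zero [simp]: "0 \<in> Sym_deg n"
  by (simp add: Sym_deg_def)

lemma Sym_deg_add: "F \<in> Sym_deg n \<Longrightarrow> G \<in> Sym_deg n \<Longrightarrow> F + G \<in> Sym_deg n"
  by (auto simp: Sym_deg_def) (metis add.right_neutral)

lemma Sym_deg_diff: "F \<in> Sym_deg n \<Longrightarrow> G \<in> Sym_deg n \<Longrightarrow> F - G \<in> Sym_deg n"
  by (auto simp: Sym_deg_def) (metis diff_zero)

lemma Sym_deg_scale: "F \<in> Sym_deg n \<Longrightarrow> scaleS c F \<in> Sym_deg n"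
  by (auto simp: Sym_deg_def scaleS_def)

lemma Sym_deg_sum: "(\<And>i. i \<in> A \<Longrightarrow> f i \<in> Sym_deg n) \<Longrightarrow> sum f A \<in> Sym_deg n"
  by (induct A rule: infinite_finite_induct) (auto intro: Sym_deg_add)

lemma SI_in_Sym_deg: "J \<in> comps n \<Longrightarrow> SI J \<in> Sym_deg n"
  by (auto simp: Sym_deg_def SI_def)

lemma support_Sym_deg: "F \<in> Sym_deg n \<Longrightarrow> {I. F I \<noteq> 0} \<subseteq> comps n"
  by (auto simp: Sym_deg_def)

lemma finsupp_Sym_deg: "F \<in> Sym_deg n \<Longrightarrow> finsupp F"
  using support_Sym_deg finite_comps finite_subset by blast

lemma Sym_deg_subset_Sym: "Sym_deg n \<subseteq> Sym"
  using finsupp_Sym_deg by (auto simp: Sym_def Sym_deg_def comps_def)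

text \<open>As \<open>S^I\<close> is the sum of the ribbons \<open>R_J\<close> with \<open>Des J \<subseteq> Des I\<close>, the number
  \<open>ribbon_coeff n F (Des J)\<close> is the coefficient of \<open>R_J\<close> in \<open>F \<in> Sym_deg n\<close>.\<close>

definition ribbon_coeff :: "nat \<Rightarrow> sym \<Rightarrow> nat set \<Rightarrow> rat" where
  "ribbon_coeff n F D = (\<Sum>I\<in>{I\<in>comps n. D \<subseteq> Des I}. F I)"

lemma ribbon_coeff_add: "ribbon_coeff n (F + G) D = ribbon_coeff n F D + ribbon_coeff n G D"
  by (simp add: ribbon_coeff_def sum.distrib)

lemma ribbon_coeff_diff: "ribbon_coeff n (F - G) D = ribbon_coeff n F D - ribbon_coeff n G D"
  by (simp add: ribbon_coeff_def sum_subtractf)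

lemma ribbon_coeff_scale: "ribbon_coeff n (scaleS c F) D = c * ribbon_coeff n F D"
  by (simp add: ribbon_coeff_def scaleS_def sum_distrib_left)

lemma ribbon_coeff_zero [simp]: "ribbon_coeff n 0 D = 0"
  by (simp add: ribbon_coeff_def)

lemma ribbon_coeff_sum: "ribbon_coeff n (sum f A) D = (\<Sum>i\<in>A. ribbon_coeff n (f i) D)"
  unfolding ribbon_coeff_def sum_fun_apply by (rule sum.swap)

lemma ribbon_coeff_SI:
  "J \<in> comps n \<Longrightarrow> ribbon_coeff n (SI J) D = (if D \<subseteq> Des J then 1 else 0)"
  unfolding ribbon_coeff_def SI_def by (simp add: sum.delta' finite_comps)

text \<open>Unitriangularity: at a longest \<open>I\<close> in the support, the ribbon coefficient at \<open>Des I\<close>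
  is \<open>F I\<close> itself.\<close>

lemma eq_0_if_ribbon_coeffs_eq_0:
  assumes F: "F \<in> Sym_deg n" and zero: "\<And>D. D \<subseteq> {1..<n} \<Longrightarrow> ribbon_coeff n F D = 0"
  shows "F = 0"
proof (rule ccontr)
  assume "F \<noteq> 0"
  define S where "S = {I. F I \<noteq> 0}"
  have S: "S \<subseteq> comps n" "finite S" "S \<noteq> {}"
    using F \<open>F \<noteq> 0\<close> finsupp_Sym_deg support_Sym_deg by (auto simp: S_def fun_eq_iff)
  have "Max (length ` S) \<in> length ` S" using S by (intro Max_in) auto
  then obtain I where I: "I \<in> S" "length I = Max (length ` S)" by auto
  have longest: "length J \<le> length I" if "J \<in> S" for J
    using that S I by simp
  have Ic: "I \<in> comps n" using I S by auto
  have "F J = 0" if J: "J \<in> comps n" "Des I \<subseteq> Des J" "J \<noteq> I" for J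
  proof -
    have "Des I \<subset> Des J" using J Des_inj Ic by blast
    then have "length I < length J"
      using psubset_card_mono[of "Des J" "Des I"] card_Des[OF Ic] card_Des[OF J(1)] by simp
    then show ?thesis using longest[of J] by (force simp: S_def)
  qed
  then have "ribbon_coeff n F (Des I) = F I"
    unfolding ribbon_coeff_def using Ic by (subst sum.remove[of _ I]) (auto simp: finite_comps)
  then show False using zero[OF Des_subset[OF Ic]] I(1) by (simp add: S_def)
qed

lemma eq_if_ribbon_coeffs_eq:
  assumes "F \<in> Sym_deg n" "G \<in> Sym_deg n"
    and "\<And>D. D \<subseteq> {1..<n} \<Longrightarrow> ribbon_coeff n F D = ribbon_coeff n G D"
  shows "F = G"
  using eq_0_if_ribbon_coeffs_eq_0[of "F - G" n] assms by (simp add: Sym_deg_diff ribbon_coeff_diff)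

lemma mult_SI_SI: "mult (SI I) (SI J) = SI (I @ J)"
proof
  fix K
  have "mult (SI I) (SI J) K = (\<Sum>i\<le>length K. if i = length I \<and> K = I @ J then 1 else 0)"
    unfolding mult_def SI_def
    by (rule sum.cong) (auto simp: append_eq_conv_conj)
  then show "mult (SI I) (SI J) K = SI (I @ J) K"
    by (simp add: SI_def)
qed

lemma mult_add_left: "mult (F + G) H = mult F H + mult G H"
  by (simp add: mult_def fun_eq_iff algebra_simps sum.distrib)

lemma mult_add_right: "mult F (G + H) = mult F G + mult F H"
  by (simp add: mult_def fun_eq_iff algebra_simps sum.distrib)

lemma mult_scale_left: "mult (scaleS c F) G = scaleS c (mult F G)"
  by (simp add: mult_def scaleS_def fun_eq_iff sum_distrib_left mult.assoc)

lemma mult_scale_right: "mult F (scaleS c G) = scaleS c (mult F G)"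
  by (simp add: mult_def scaleS_def fun_eq_iff sum_distrib_left mult.left_commute)

lemma mult_sum_left: "mult (sum f A) G = (\<Sum>i\<in>A. mult (f i) G)"
  by (simp add: mult_def fun_eq_iff sum_fun_apply sum_distrib_right) (intro allI sum.swap)

lemma mult_sum_right: "mult G (sum f A) = (\<Sum>i\<in>A. mult G (f i))"
  by (simp add: mult_def fun_eq_iff sum_fun_apply sum_distrib_left) (intro allI sum.swap)

lemma mult_one_left [simp]: "mult one_sym F = F"
proof
  fix K
  have "mult one_sym F K = (\<Sum>i\<le>length K. if i = 0 then F (drop i K) else 0)"
    unfolding mult_def one_sym_def by (rule sum.cong) (auto simp: SI_def)
  then show "mult one_sym F K = F K" by simp
qed

lemma mult_one_right [simp]: "mult F one_sym = F"
proof
  fix K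
  have "mult F one_sym K = (\<Sum>i\<le>length K. if i = length K then F (take i K) else 0)"
    unfolding mult_def one_sym_def by (rule sum.cong) (auto simp: SI_def)
  then show "mult F one_sym K = F K" by simp
qed

lemma sum_triangle_shift:
  "(\<Sum>j\<le>(n::nat). \<Sum>i\<le>j. f i j) = (\<Sum>i\<le>n. \<Sum>l\<le>n-i. f i (i+l))"
proof -
  have "(\<Sum>j\<le>n. \<Sum>i\<le>j. f i j) = (\<Sum>(j,i)\<in>(SIGMA j:{..n}. {..j}). f i j)"
    by (rule sum.Sigma) simp_all
  also have "\<dots> = (\<Sum>(i,l)\<in>(SIGMA i:{..n}. {..n-i}). f i (i+l))"
    by (rule sum.reindex_bij_witness[where i="\<lambda>(i,l). (i+l, i)" and j="\<lambda>(j,i). (i, j-i)"]) auto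
  also have "\<dots> = (\<Sum>i\<le>n. \<Sum>l\<le>n-i. f i (i+l))"
    by (rule sum.Sigma[symmetric]) simp_all
  finally show ?thesis .
qed

lemma mult_assoc: "mult (mult F G) H = mult F (mult G H)"
proof
  fix K :: "nat list"
  have "mult (mult F G) H K =
      (\<Sum>j\<le>length K. \<Sum>i\<le>j. F (take i K) * G (drop i (take j K)) * H (drop j K))"
    unfolding mult_def
    by (rule sum.cong) (auto simp: sum_distrib_right min_absorb1 intro!: sum.cong)
  also have "\<dots> = (\<Sum>i\<le>length K. \<Sum>l\<le>length K - i.
      F (take i K) * G (drop i (take (i+l) K)) * H (drop (i+l) K))"
    by (rule sum_triangle_shift)
  also have "\<dots> = mult F (mult G H) K"
    unfolding mult_def
    by (rule sum.cong) (auto simp: sum_distrib_left drop_take add.commute mult.assoc intro!: sum.cong)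
  finally show "mult (mult F G) H K = mult F (mult G H) K" .
qed

lemma mult_Sym_deg:
  assumes F: "F \<in> Sym_deg m" and G: "G \<in> Sym_deg k"
  shows "mult F G \<in> Sym_deg (m + k)"
  unfolding Sym_deg_def
proof (intro CollectI allI impI)
  fix K assume "mult F G K \<noteq> 0"
  then obtain i where "F (take i K) * G (drop i K) \<noteq> 0"
    unfolding mult_def by (meson sum.not_neutral_contains_not_neutral)
  then have "take i K \<in> comps m" "drop i K \<in> comps k" using F G by (auto simp: Sym_deg_def)
  then show "K \<in> comps (m + k)" using append_in_comps by fastforce
qed

lemma SI_expansion:
  assumes "finite A" "{I. F I \<noteq> 0} \<subseteq> A"
  shows "F = (\<Sum>I\<in>A. scaleS (F I) (SI I))"
proof
  fix J
  show "F J = (\<Sum>I\<in>A. scaleS (F I) (SI I)) J"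
    using assms by (auto simp: sum_fun_apply scaleS_def SI_def if_distrib sum.delta' cong: if_cong)
qed

lemma mult_expansion:
  assumes "finite A" "{I. F I \<noteq> 0} \<subseteq> A" "finite B" "{J. G J \<noteq> 0} \<subseteq> B"
  shows "mult F G = (\<Sum>I\<in>A. \<Sum>J\<in>B. scaleS (F I * G J) (SI (I @ J)))"
proof -
  have "mult F G = mult (\<Sum>I\<in>A. scaleS (F I) (SI I)) (\<Sum>J\<in>B. scaleS (G J) (SI J))"
    by (simp only: SI_expansion[OF assms(1,2), symmetric] SI_expansion[OF assms(3,4), symmetric])
  also have "\<dots> = (\<Sum>I\<in>A. \<Sum>J\<in>B. mult (scaleS (F I) (SI I)) (scaleS (G J) (SI J)))"
    by (subst mult_sum_left) (simp only: mult_sum_right)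
  also have "\<dots> = (\<Sum>I\<in>A. \<Sum>J\<in>B. scaleS (F I * G J) (SI (I @ J)))"
    by (simp add: mult_scale_left mult_scale_right mult_SI_SI mult.commute)
  finally show ?thesis .
qed

definition low_part :: "nat \<Rightarrow> nat set \<Rightarrow> nat set" where
  "low_part m C = {x\<in>C. x < m}"

definition high_part :: "nat \<Rightarrow> nat set \<Rightarrow> nat set" where
  "high_part m C = (\<lambda>x. x - m) ` {x\<in>C. m < x}"

lemma mem_high_part: "y \<in> high_part m C \<longleftrightarrow> 0 < y \<and> m + y \<in> C"
  by (auto simp: high_part_def image_iff intro: bexI[of _ "m + y"])

lemma low_part_subset: "C \<subseteq> {1..<n} \<Longrightarrow> low_part m C \<subseteq> {1..<m}"
  by (auto simp: low_part_def)

lemma high_part_subset: "C \<subseteq> {1..<n} \<Longrightarrow> high_part m C \<subseteq> {1..<n - m}"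
  by (auto simp: mem_high_part)

lemma subset_Des_append_iff:
  assumes I: "I \<in> comps m" and J: "J \<in> comps k" and C: "C \<subseteq> {1..<m+k}"
  shows "C \<subseteq> Des (I @ J) \<longleftrightarrow> low_part m C \<subseteq> Des I \<and> high_part m C \<subseteq> Des J"
proof -
  have "sum_list I = m" using I by (simp add: comps_def)
  then have Des_IJ: "Des (I @ J) = Des I \<union> (+) m ` Des J \<union> (if 0 < m \<and> 0 < k then {m} else {})"
    using Des_append[of I J] comps_Nil_iff[OF I] comps_Nil_iff[OF J] by simp
  have DI: "Des I \<subseteq> {1..<m}" using Des_subset[OF I] .
  show ?thesis
  proof
    assume sub: "C \<subseteq> Des (I @ J)"
    have "low_part m C \<subseteq> Des I"
      using sub DI Des_IJ by (auto simp: low_part_def split: if_splits)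
    moreover have "high_part m C \<subseteq> Des J"
    proof
      fix y assume "y \<in> high_part m C"
      then have "0 < y" "m + y \<in> Des (I @ J)" using sub by (auto simp: mem_high_part)
      then show "y \<in> Des J" using DI Des_IJ by (auto split: if_splits)
    qed
    ultimately show "low_part m C \<subseteq> Des I \<and> high_part m C \<subseteq> Des J" ..
  next
    assume parts: "low_part m C \<subseteq> Des I \<and> high_part m C \<subseteq> Des J"
    show "C \<subseteq> Des (I @ J)"
    proof
      fix x assume x: "x \<in> C"
      consider "x < m" | "x = m" | "m < x" by linarith
      then show "x \<in> Des (I @ J)"
      proof cases
        case 1 then show ?thesis using parts x Des_IJ by (auto simp: low_part_def)
      next
        case 2 then show ?thesis using x C Des_IJ by auto
      next
        case 3
        then have "x - m \<in> Des J" using parts x by (auto simp: mem_high_part)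
        then have "x \<in> (+) m ` Des J" using 3 by (auto intro: image_eqI[where x="x - m"])
        then show ?thesis using Des_IJ by simp
      qed
    qed
  qed
qed

text \<open>A product of two ribbons is the sum of the ribbons obtained by concatenating them and by
  merging them at the junction, so the coefficient does not depend on whether \<open>m \<in> C\<close>.\<close>

lemma ribbon_coeff_mult:
  assumes F: "F \<in> Sym_deg m" and G: "G \<in> Sym_deg k" and C: "C \<subseteq> {1..<m+k}"
  shows "ribbon_coeff (m+k) (mult F G) C = ribbon_coeff m F (low_part m C) * ribbon_coeff k G (high_part m C)"
proof -
  have "ribbon_coeff (m+k) (mult F G) C =
      (\<Sum>I\<in>comps m. \<Sum>J\<in>comps k. F I * G J * ribbon_coeff (m+k) (SI (I @ J)) C)"
    by (simp add: mult_expansion[OF finite_comps support_Sym_deg[OF F] finite_comps support_Sym_deg[OF G]]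
        ribbon_coeff_sum ribbon_coeff_scale)
  also have "\<dots> = (\<Sum>I\<in>comps m. \<Sum>J\<in>comps k.
      (if low_part m C \<subseteq> Des I then F I else 0) * (if high_part m C \<subseteq> Des J then G J else 0))"
    by (intro sum.cong refl)
       (simp add: ribbon_coeff_SI append_in_comps subset_Des_append_iff[OF _ _ C])
  also have "\<dots> = ribbon_coeff m F (low_part m C) * ribbon_coeff k G (high_part m C)"
    by (simp add: ribbon_coeff_def sum_product sum.inter_filter finite_comps)
  finally show ?thesis .
qed

lemma sum_comps_Des_eq:
  assumes "D \<subseteq> {1..<n}"
  shows "(\<Sum>J\<in>{J\<in>comps n. P (Des J)}. if Des J = D then 1 else 0 :: rat) = (if P D then 1 else 0)"
proof -
  obtain J0 where J0: "J0 \<in> comps n" "Des J0 = D" using Des_surj assms by blast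
  have "(\<Sum>J\<in>{J\<in>comps n. P (Des J)}. if Des J = D then 1 else 0 :: rat) =
      (\<Sum>J\<in>{J\<in>comps n. P (Des J)}. if J = J0 then 1 else 0)"
    by (rule sum.cong) (use J0 Des_inj in auto)
  also have "\<dots> = (if P D then 1 else 0)"
    using J0 by (simp add: finite_comps)
  finally show ?thesis .
qed

lemma ribbon_aux_Sym_deg_coeff:
  assumes "J \<in> comps n" "card (Des J) \<le> k"
  shows "ribbon_aux k J \<in> Sym_deg n \<and>
    (\<forall>D. D \<subseteq> {1..<n} \<longrightarrow> ribbon_coeff n (ribbon_aux k J) D = (if D = Des J then 1 else 0))"
  using assms
proof (induct k arbitrary: J)
  case 0
  then show ?case by (auto simp: SI_in_Sym_deg ribbon_coeff_SI)
next
  case (Suc k)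
  define A where "A = {J'\<in>comps n. Des J' \<subset> Des J}"
  have IH: "ribbon_aux k J' \<in> Sym_deg n \<and> (\<forall>D. D \<subseteq> {1..<n} \<longrightarrow>
      ribbon_coeff n (ribbon_aux k J') D = (if D = Des J' then 1 else 0))" if "J' \<in> A" for J'
    using Suc that psubset_card_mono[of "Des J" "Des J'"] by (auto simp: A_def)
  have r: "ribbon_aux (Suc k) J = SI J - sum (ribbon_aux k) A"
    using Suc.prems by (simp add: A_def comps_def)
  have "ribbon_coeff n (ribbon_aux (Suc k) J) D = (if D = Des J then 1 else 0)"
    if D: "D \<subseteq> {1..<n}" for D
  proof -
    have "ribbon_coeff n (ribbon_aux (Suc k) J) D =
        (if D \<subseteq> Des J then 1 else 0) - (\<Sum>J'\<in>A. if Des J' = D then 1 else 0)"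
      unfolding r using IH D Suc.prems
      by (auto simp: ribbon_coeff_diff ribbon_coeff_sum ribbon_coeff_SI intro!: sum.cong)
    also have "(\<Sum>J'\<in>A. if Des J' = D then 1 else 0) = (if D \<subset> Des J then 1 else (0::rat))"
      unfolding A_def by (rule sum_comps_Des_eq[OF D])
    also have "(if D \<subseteq> Des J then 1 else 0) - (if D \<subset> Des J then 1 else 0) =
        (if D = Des J then 1 else (0::rat))"
      by (cases "D = Des J"; cases "D \<subseteq> Des J") auto
    finally show ?thesis .
  qed
  moreover have "ribbon_aux (Suc k) J \<in> Sym_deg n"
    unfolding r using IH Suc.prems by (intro Sym_deg_diff SI_in_Sym_deg Sym_deg_sum) auto
  ultimately show ?case by blast
qed

lemma ribbon_in_Sym_deg: "J \<in> comps n \<Longrightarrow> ribbon J \<in> Sym_deg n"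
  unfolding ribbon_def using ribbon_aux_Sym_deg_coeff card_Des by simp

lemma ribbon_coeff_ribbon:
  "J \<in> comps n \<Longrightarrow> D \<subseteq> {1..<n} \<Longrightarrow> ribbon_coeff n (ribbon J) D = (if D = Des J then 1 else 0)"
  unfolding ribbon_def using ribbon_aux_Sym_deg_coeff card_Des by simp

lemma Des_replicate_1: "Des (replicate k 1) = {1..<k}"
proof (induct k)
  case (Suc k)
  have "(+) 1 ` {1..<k} = {2..<Suc k}"
    by (auto simp: image_iff intro!: bexI[where x="_ - 1"])
  then show ?case using Suc by (cases "k = 0") (auto simp: Des_Cons)
qed simp

lemma replicate_1_in_comps: "replicate k 1 \<in> comps k"
  by (simp add: comps_def sum_list_replicate)

lemma Lambda_in_Sym_deg: "Lambda k \<in> Sym_deg k"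
  unfolding Lambda_def using replicate_1_in_comps by (rule ribbon_in_Sym_deg)

lemma ribbon_coeff_Lambda:
  "D \<subseteq> {1..<k} \<Longrightarrow> ribbon_coeff k (Lambda k) D = (if D = {1..<k} then 1 else 0)"
  unfolding Lambda_def using replicate_1_in_comps ribbon_coeff_ribbon Des_replicate_1 by simp

lemma Lambda_0: "Lambda 0 = one_sym"
  by (simp add: Lambda_def ribbon_def one_sym_def)

lemma Sn_0: "Sn 0 = one_sym"
  by (simp add: Sn_def one_sym_def)

lemma Sn_eq_SI: "Sn j = SI (if j = 0 then [] else [j])" and single_in_comps: "(if j = 0 then [] else [j]) \<in> comps j"
  by (auto simp: Sn_def comps_def)

lemma Sn_in_Sym_deg: "Sn j \<in> Sym_deg j"
  by (simp only: Sn_eq_SI SI_in_Sym_deg single_in_comps)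

lemma ribbon_coeff_Sn: "ribbon_coeff j (Sn j) D = (if D = {} then 1 else 0)"
  by (simp only: Sn_eq_SI ribbon_coeff_SI single_in_comps) (simp add: Des_Cons)

lemma one_in_Sym_deg: "one_sym \<in> Sym_deg 0"
  by (simp add: one_sym_def SI_in_Sym_deg comps_0)

definition peaks :: "nat set \<Rightarrow> nat set" where
  "peaks C = {a \<in> C. a \<noteq> 1 \<and> a - 1 \<notin> C}"

lemma HP_eq_peaks_Des: "HP J = peaks (Des J)"
  by (simp add: HP_def peaks_def)

lemma peaks_low_part: "peaks (low_part m C) = low_part m (peaks C)"
  by (auto simp: peaks_def low_part_def)

lemma peaks_high_part: "peaks (high_part m C) = high_part m {a \<in> peaks C. Suc m < a}"
proof (intro set_eqI iffI)
  fix b assume "b \<in> peaks (high_part m C)"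
  then have b: "b \<in> high_part m C" "b \<noteq> 1" "b - 1 \<notin> high_part m C" by (auto simp: peaks_def)
  then obtain x where x: "x \<in> C" "m < x" "b = x - m" by (auto simp: high_part_def)
  have "x - 1 \<notin> C"
  proof
    assume "x - 1 \<in> C"
    moreover have "m < x - 1" using x b by auto
    ultimately have "b - 1 \<in> high_part m C" using x unfolding high_part_def
      by (intro image_eqI[where x="x - 1"]) auto
    then show False using b by simp
  qed
  then show "b \<in> high_part m {a \<in> peaks C. Suc m < a}"
    using x b unfolding high_part_def peaks_def by (intro image_eqI[where x=x]) auto
next
  fix b assume "b \<in> high_part m {a \<in> peaks C. Suc m < a}"
  then obtain x where x: "x \<in> C" "x - 1 \<notin> C" "Suc m < x" "b = x - m"
    by (auto simp: high_part_def peaks_def)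
  have "b - 1 \<notin> high_part m C"
  proof
    assume "b - 1 \<in> high_part m C"
    then obtain y where "y \<in> C" "m < y" "b - 1 = y - m" by (auto simp: high_part_def)
    then have "y = x - 1" using x by auto
    then show False using x \<open>y \<in> C\<close> by simp
  qed
  moreover have "b \<in> high_part m C" using x unfolding high_part_def by auto
  ultimately show "b \<in> peaks (high_part m C)" using x by (auto simp: peaks_def)
qed

lemma peaks_in_peak_sets:
  assumes "C \<subseteq> {1..<n}" shows "peaks C \<in> peak_sets n"
proof -
  have "peaks C \<subseteq> {2..n-1}"
  proof
    fix x assume "x \<in> peaks C"
    then have "x \<in> C" "x \<noteq> 1" by (auto simp: peaks_def)
    then show "x \<in> {2..n-1}" using assms by fastforce
  qed
  then show ?thesis by (auto simp: peaks_def peak_sets_def)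
qed

lemma peaks_idem: "peaks (peaks C) = peaks C"
  by (auto simp: peaks_def)

lemma peaks_peak_set: "P \<in> peak_sets n \<Longrightarrow> peaks P = P"
  by (auto simp: peaks_def peak_sets_def)

lemma peak_set_subset: "P \<in> peak_sets n \<Longrightarrow> P \<subseteq> {1..<n}"
  unfolding peak_sets_def by (auto dest!: subsetD)

lemma finite_peak_sets: "finite (peak_sets n)"
  by (rule finite_subset[of _ "Pow {2..n-1}"]) (auto simp: peak_sets_def)

lemma Pi_class_in_Sym_deg: "Pi_class n P \<in> Sym_deg n"
  unfolding Pi_class_def by (intro Sym_deg_sum ribbon_in_Sym_deg) auto

lemma ribbon_coeff_Pi_class:
  assumes C: "C \<subseteq> {1..<n}"
  shows "ribbon_coeff n (Pi_class n P) C = (if peaks C = P then 1 else 0)"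
proof -
  have "ribbon_coeff n (Pi_class n P) C = (\<Sum>J\<in>{J\<in>comps n. peaks (Des J) = P}. if Des J = C then 1 else 0)"
    unfolding Pi_class_def HP_eq_peaks_Des using C
    by (auto simp: ribbon_coeff_sum ribbon_coeff_ribbon intro!: sum.cong)
  also have "\<dots> = (if peaks C = P then 1 else 0)"
    by (rule sum_comps_Des_eq[OF C, of "\<lambda>E. peaks E = P"])
  finally show ?thesis .
qed

lemma peaks_eq_empty_iff:
  assumes C: "C \<subseteq> {1..<n}"
  shows "peaks C = {} \<longleftrightarrow> C = {1..card C}"
proof
  assume none: "peaks C = {}"
  have down: "b \<in> C" if "a \<in> C" "1 \<le> b" "b \<le> a" for a b
    using that
  proof (induct "a - b" arbitrary: a)
    case (Suc d)
    then have "a - 1 \<in> C" using none unfolding peaks_def by auto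
    then show ?case using Suc(1)[of "a - 1"] Suc by auto
  qed simp
  show "C = {1..card C}"
  proof (cases "C = {}")
    case False
    define M where "M = Max C"
    have "finite C" using C finite_subset by blast
    then have "M \<in> C" "\<And>x. x \<in> C \<Longrightarrow> x \<le> M" using False by (auto simp: M_def)
    then have "C = {1..M}" using down C by fastforce
    then show ?thesis by simp
  qed simp
next
  assume "C = {1..card C}"
  moreover have "peaks {1..c} = {}" for c by (auto simp: peaks_def)
  ultimately show "peaks C = {}" by metis
qed

lemma low_part_eq_empty_iff: "low_part m C = {} \<longleftrightarrow> (\<forall>x\<in>C. m \<le> x)"
  by (auto simp: low_part_def not_less)

lemma high_part_eq_empty_iff: "high_part m C = {} \<longleftrightarrow> (\<forall>x\<in>C. x \<le> m)"
  by (auto simp: high_part_def not_less)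

lemma ribbon_coeff_Lambda_Sn:
  assumes k: "k \<le> n" and C: "C \<subseteq> {1..<n}"
  shows "ribbon_coeff n (mult (Lambda k) (Sn (n - k))) C = (if C = {1..<k} \<or> C = {1..k} then 1 else 0)"
proof -
  have "ribbon_coeff n (mult (Lambda k) (Sn (n - k))) C =
      ribbon_coeff k (Lambda k) (low_part k C) * ribbon_coeff (n - k) (Sn (n - k)) (high_part k C)"
    using ribbon_coeff_mult[OF Lambda_in_Sym_deg Sn_in_Sym_deg, of C k "n - k"] k C by simp
  also have "\<dots> = (if low_part k C = {1..<k} \<and> (\<forall>x\<in>C. x \<le> k) then 1 else 0)"
    by (simp add: ribbon_coeff_Lambda[OF low_part_subset[OF C]] ribbon_coeff_Sn high_part_eq_empty_iff)
  also have "low_part k C = {1..<k} \<and> (\<forall>x\<in>C. x \<le> k) \<longleftrightarrow> C = {1..<k} \<or> C = {1..k}"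
  proof
    assume parts: "low_part k C = {1..<k} \<and> (\<forall>x\<in>C. x \<le> k)"
    then have "C = {1..<k} \<union> (C \<inter> {k})"
      by (auto simp: low_part_def set_eq_iff less_le)
    then show "C = {1..<k} \<or> C = {1..k}"
      using C by (cases "k \<in> C") (auto simp: atLeastLessThanSuc_atLeastAtMost[symmetric])
  next
    assume "C = {1..<k} \<or> C = {1..k}"
    then show "low_part k C = {1..<k} \<and> (\<forall>x\<in>C. x \<le> k)"
      by (auto simp: low_part_def)
  qed
  finally show ?thesis .
qed

lemma tildeS_in_Sym_deg: "tildeS n \<in> Sym_deg n"
  unfolding tildeS_def
proof (intro Sym_deg_sum)
  fix k assume "k \<in> {..n}"
  then show "mult (Lambda k) (Sn (n - k)) \<in> Sym_deg n"
    using mult_Sym_deg[OF Lambda_in_Sym_deg Sn_in_Sym_deg, of k "n - k"] by simp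
qed

lemma tildeS_0: "tildeS 0 = one_sym"
  by (simp add: tildeS_def Lambda_0 Sn_0)

lemma ribbon_coeff_tildeS:
  assumes n: "1 \<le> n" and C: "C \<subseteq> {1..<n}"
  shows "ribbon_coeff n (tildeS n) C = (if peaks C = {} then 2 else 0)"
proof -
  define K where "K = {k\<in>{..n}. C = {1..<k} \<or> C = {1..k}}"
  have "ribbon_coeff n (tildeS n) C = (\<Sum>k\<le>n. if C = {1..<k} \<or> C = {1..k} then 1 else 0)"
    unfolding tildeS_def ribbon_coeff_sum using C by (simp add: ribbon_coeff_Lambda_Sn)
  also have "\<dots> = of_nat (card K)"
    by (simp add: K_def sum.If_cases Int_def)
  also have "card K = (if peaks C = {} then 2 else 0)"
  proof (cases "peaks C = {}")
    case True
    define c where "c = card C"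
    have Cc: "C = {1..c}" using True peaks_eq_empty_iff[OF C] by (simp add: c_def)
    have "c < n"
    proof (cases "c = 0")
      case False
      then have "c \<in> C" using Cc by simp
      then show ?thesis using C by auto
    qed (use n in simp)
    have "k \<in> K \<longleftrightarrow> k = c \<or> k = Suc c" for k
    proof
      assume "k \<in> K"
      then have "c = card {1..<k} \<or> c = card {1..k}" by (auto simp: K_def c_def)
      then show "k = c \<or> k = Suc c" by auto
    next
      assume "k = c \<or> k = Suc c"
      then show "k \<in> K"
        using Cc \<open>c < n\<close> by (auto simp: K_def atLeastLessThanSuc_atLeastAtMost)
    qed
    then have "K = {c, Suc c}" by auto
    then show ?thesis using True by simp
  next
    case False
    have "peaks {1..<k} = {}" "peaks {1..k} = {}" for k
      by (auto simp: peaks_def)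
    then have "K = {}" using False by (auto simp: K_def)
    then show ?thesis using False by simp
  qed
  finally show ?thesis by simp
qed

lemma tildeS_eq_Pi_class_empty: "1 \<le> n \<Longrightarrow> tildeS n = scaleS 2 (Pi_class n {})"
  by (rule eq_if_ribbon_coeffs_eq[OF tildeS_in_Sym_deg Sym_deg_scale[OF Pi_class_in_Sym_deg]])
     (simp add: ribbon_coeff_tildeS ribbon_coeff_scale ribbon_coeff_Pi_class)

text \<open>Both \<open>theta\<close> and \<open>Delta\<close> are of this form; only finitely supported arguments are meant.\<close>

definition lin_ext :: "(nat list \<Rightarrow> 'a \<Rightarrow> rat) \<Rightarrow> sym \<Rightarrow> 'a \<Rightarrow> rat" where
  "lin_ext b F = (\<Sum>I\<in>{I. F I \<noteq> 0}. (\<lambda>x. F I * b I x))"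

lemma theta_eq_lin_ext: "theta = lin_ext thetaS"
  by (simp add: fun_eq_iff theta_def lin_ext_def scaleS_def)

lemma Delta_eq_lin_ext: "Delta = lin_ext DeltaS"
  by (simp add: fun_eq_iff Delta_def lin_ext_def scaleT_def)

lemma finsupp_add: "finsupp F \<Longrightarrow> finsupp G \<Longrightarrow> finsupp (F + G)"
  by (rule finite_subset[of _ "{x. F x \<noteq> 0} \<union> {x. G x \<noteq> 0}"]) auto

lemma finsupp_sum: "(\<And>i. i \<in> A \<Longrightarrow> finsupp (f i)) \<Longrightarrow> finsupp (sum f A)"
proof (induct A rule: infinite_finite_induct)
  case (insert i A)
  then show ?case by (simp only: sum.insert[OF insert.hyps(1,2)]) (intro finsupp_add; simp)
qed simp_all

lemma finsupp_scale: "finsupp F \<Longrightarrow> finsupp (scaleS c F)"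
  by (rule finite_subset[of _ "{I. F I \<noteq> 0}"]) (auto simp: scaleS_def)

lemma finsupp_SI: "finsupp (SI I)"
  by (rule finite_subset[of _ "{I}"]) (auto simp: SI_def)

lemma lin_ext_apply:
  assumes "finite A" "{I. F I \<noteq> 0} \<subseteq> A"
  shows "lin_ext b F x = (\<Sum>I\<in>A. F I * b I x)"
proof -
  have "lin_ext b F x = (\<Sum>I\<in>{I. F I \<noteq> 0}. F I * b I x)"
    by (simp add: lin_ext_def sum_fun_apply)
  also have "\<dots> = (\<Sum>I\<in>A. F I * b I x)"
    by (rule sum.mono_neutral_left) (use assms in auto)
  finally show ?thesis .
qed

lemma lin_ext_add:
  assumes "finsupp F" "finsupp G"
  shows "lin_ext b (F + G) = lin_ext b F + lin_ext b G"
proof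
  fix x
  define A where "A = {I. F I \<noteq> 0} \<union> {I. G I \<noteq> 0}"
  have A: "finite A" "{I. F I \<noteq> 0} \<subseteq> A" "{I. G I \<noteq> 0} \<subseteq> A" "{I. (F + G) I \<noteq> 0} \<subseteq> A"
    using assms by (auto simp: A_def)
  show "lin_ext b (F + G) x = (lin_ext b F + lin_ext b G) x"
    by (simp add: lin_ext_apply[OF A(1,2)] lin_ext_apply[OF A(1,3)] lin_ext_apply[OF A(1,4)]
        sum.distrib distrib_right)
qed

lemma lin_ext_scale:
  assumes F: "finsupp F"
  shows "lin_ext b (scaleS c F) = (\<lambda>x. c * lin_ext b F x)"
proof
  fix x
  have "lin_ext b (scaleS c F) x = (\<Sum>I\<in>{I. F I \<noteq> 0}. scaleS c F I * b I x)"
    by (rule lin_ext_apply) (use F in \<open>auto simp: scaleS_def\<close>)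
  also have "\<dots> = c * lin_ext b F x"
    by (simp add: lin_ext_apply[OF F subset_refl] scaleS_def sum_distrib_left mult.assoc)
  finally show "lin_ext b (scaleS c F) x = c * lin_ext b F x" .
qed

lemma lin_ext_sum:
  "(\<And>i. i \<in> A \<Longrightarrow> finsupp (f i)) \<Longrightarrow> lin_ext b (sum f A) = (\<Sum>i\<in>A. lin_ext b (f i))"
proof (induct A rule: infinite_finite_induct)
  case (insert i A)
  have "lin_ext b (sum f (insert i A)) = lin_ext b (f i + sum f A)"
    by (simp only: sum.insert[OF insert.hyps(1,2)])
  also have "\<dots> = lin_ext b (f i) + lin_ext b (sum f A)"
    using insert.prems by (intro lin_ext_add finsupp_sum) auto
  also have "\<dots> = (\<Sum>j\<in>insert i A. lin_ext b (f j))"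
    using insert.hyps insert.prems by simp
  finally show ?case .
qed (simp_all add: lin_ext_def)

lemma lin_ext_SI: "lin_ext b (SI I) = b I"
  by (rule ext) (simp add: lin_ext_apply[of "{I}"] SI_def)

lemma theta_sum:
  "(\<And>i. i \<in> A \<Longrightarrow> finsupp (f i)) \<Longrightarrow> theta (sum f A) = (\<Sum>i\<in>A. theta (f i))"
  by (simp add: theta_eq_lin_ext lin_ext_sum)

lemma theta_add: "finsupp F \<Longrightarrow> finsupp G \<Longrightarrow> theta (F + G) = theta F + theta G"
  by (simp add: theta_eq_lin_ext lin_ext_add)

lemma theta_scale: "finsupp F \<Longrightarrow> theta (scaleS c F) = scaleS c (theta F)"
  by (simp only: theta_eq_lin_ext lin_ext_scale) (simp add: scaleS_def)

lemma theta_SI: "theta (SI I) = thetaS I"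
  by (simp add: theta_eq_lin_ext lin_ext_SI)

lemma theta_expansion:
  "finite A \<Longrightarrow> {I. F I \<noteq> 0} \<subseteq> A \<Longrightarrow> theta F = (\<Sum>I\<in>A. scaleS (F I) (thetaS I))"
  by (rule ext) (simp add: theta_eq_lin_ext lin_ext_apply scaleS_def sum_fun_apply)

lemma thetaS_Nil: "thetaS [] = one_sym"
  by (simp add: thetaS_def)

lemma thetaS_Cons: "thetaS (i # I) = mult (tildeS i) (thetaS I)"
  by (simp add: thetaS_def)

lemma thetaS_append: "thetaS (I @ J) = mult (thetaS I) (thetaS J)"
  by (induct I) (simp_all add: thetaS_Nil thetaS_Cons mult_assoc)

lemma theta_mult:
  assumes F: "finsupp F" and G: "finsupp G"
  shows "theta (mult F G) = mult (theta F) (theta G)"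
proof -
  define A where "A = {I. F I \<noteq> 0}"
  define B where "B = {I. G I \<noteq> 0}"
  have A: "finite A" "{I. F I \<noteq> 0} \<subseteq> A" and B: "finite B" "{I. G I \<noteq> 0} \<subseteq> B"
    using F G by (auto simp: A_def B_def)
  have "theta (mult F G) = (\<Sum>I\<in>A. \<Sum>J\<in>B. scaleS (F I * G J) (mult (thetaS I) (thetaS J)))"
    by (simp add: mult_expansion[OF A B] theta_sum finsupp_sum finsupp_SI finsupp_scale theta_scale
        theta_SI thetaS_append)
  also have "\<dots> = mult (\<Sum>I\<in>A. scaleS (F I) (thetaS I)) (\<Sum>J\<in>B. scaleS (G J) (thetaS J))"
    by (subst mult_sum_left) (simp add: mult_sum_right mult_scale_left mult_scale_right mult.commute)
  also have "\<dots> = mult (theta F) (theta G)"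
    by (simp only: theta_expansion[OF A] theta_expansion[OF B])
  finally show ?thesis .
qed

lemma thetaS_in_Sym_deg: "thetaS I \<in> Sym_deg (sum_list I)"
  by (induct I) (simp_all add: thetaS_Nil thetaS_Cons mult_Sym_deg tildeS_in_Sym_deg one_in_Sym_deg)

lemma theta_Sn: "theta (Sn n) = tildeS n"
  by (cases "n = 0") (simp_all add: Sn_def theta_SI thetaS_Nil thetaS_Cons tildeS_0)

lemma theta_one: "theta one_sym = one_sym"
  by (simp add: one_sym_def theta_SI thetaS_Nil)

lemma theta_image_subspace: "VS.subspace (theta ` Sym_deg n)"
proof (rule VS.subspaceI)
  show "0 \<in> theta ` Sym_deg n"
    using theta_scale[of 0 0] finsupp_Sym_deg Sym_deg_zero by (metis VS.scale_zero_left image_eqI)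
next
  fix X Y assume "X \<in> theta ` Sym_deg n" "Y \<in> theta ` Sym_deg n"
  then obtain F G where "F \<in> Sym_deg n" "G \<in> Sym_deg n" "X = theta F" "Y = theta G" by auto
  then show "X + Y \<in> theta ` Sym_deg n"
    using theta_add[of F G] finsupp_Sym_deg Sym_deg_add by (metis image_eqI)
next
  fix c X assume "X \<in> theta ` Sym_deg n"
  then obtain F where "F \<in> Sym_deg n" "X = theta F" by auto
  then show "scaleS c X \<in> theta ` Sym_deg n"
    using theta_scale[of F c] finsupp_Sym_deg Sym_deg_scale by (metis image_eqI)
qed

lemma theta_image_mult:
  assumes "X \<in> theta ` Sym_deg m" "Y \<in> theta ` Sym_deg k"
  shows "mult X Y \<in> theta ` Sym_deg (m + k)"
proof -
  obtain F G where "F \<in> Sym_deg m" "G \<in> Sym_deg k" "X = theta F" "Y = theta G"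
    using assms by auto
  then show ?thesis
    using theta_mult[of F G] finsupp_Sym_deg mult_Sym_deg by (intro image_eqI[of _ _ "mult F G"]) auto
qed

lemma Pi_class_0_empty: "Pi_class 0 {} = one_sym"
  by (rule eq_if_ribbon_coeffs_eq[OF Pi_class_in_Sym_deg one_in_Sym_deg])
     (simp add: ribbon_coeff_Pi_class one_sym_def ribbon_coeff_SI comps_0 peaks_def)

lemma Pi_class_empty_in_theta_image: "Pi_class n {} \<in> theta ` Sym_deg n"
proof (cases "n = 0")
  case True
  then show ?thesis
    using theta_one one_in_Sym_deg Pi_class_0_empty by (intro image_eqI[of _ _ one_sym]) auto
next
  case False
  then have "Pi_class n {} = scaleS (1/2) (theta (Sn n))"
    using tildeS_eq_Pi_class_empty[of n] by (simp add: theta_Sn scaleS_def fun_eq_iff)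
  moreover have "theta (Sn n) \<in> theta ` Sym_deg n" using Sn_in_Sym_deg by blast
  ultimately show ?thesis
    using VS.subspace_scale[OF theta_image_subspace] by simp
qed

lemma Pi_class_eq_0:
  assumes "P \<notin> peak_sets n" shows "Pi_class n P = 0"
proof (rule eq_if_ribbon_coeffs_eq[OF Pi_class_in_Sym_deg Sym_deg_zero])
  fix C assume C: "C \<subseteq> {1..<n}"
  then have "peaks C \<noteq> P" using peaks_in_peak_sets assms by blast
  then show "ribbon_coeff n (Pi_class n P) C = ribbon_coeff n 0 C"
    by (simp add: ribbon_coeff_Pi_class[OF C])
qed

text \<open>The recursion behind \<open>\<P>_n \<subseteq> \<theta>(Sym_n)\<close>: multiplying by \<open>\<Pi>_\<emptyset>\<close> adds at most one
  peak, at \<open>m\<close> or at \<open>m + 1\<close>.\<close>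

lemma mult_Pi_class_Pi_class_empty:
  assumes P: "\<forall>x\<in>P. x < m"
  shows "mult (Pi_class m P) (Pi_class k {}) =
    Pi_class (m + k) P + Pi_class (m + k) (insert m P) + Pi_class (m + k) (insert (Suc m) P)"
proof (rule eq_if_ribbon_coeffs_eq)
  show "mult (Pi_class m P) (Pi_class k {}) \<in> Sym_deg (m + k)"
    by (intro mult_Sym_deg Pi_class_in_Sym_deg)
  show "Pi_class (m + k) P + Pi_class (m + k) (insert m P) + Pi_class (m + k) (insert (Suc m) P)
      \<in> Sym_deg (m + k)"
    by (intro Sym_deg_add Pi_class_in_Sym_deg)
next
  fix C assume C: "C \<subseteq> {1..<m + k}"
  define Q where "Q = peaks C"
  have high: "high_part m C \<subseteq> {1..<k}" using high_part_subset[OF C, of m] by simp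
  have no_high: "high_part m {a \<in> Q. Suc m < a} = {} \<longleftrightarrow> (\<forall>a\<in>Q. a \<le> Suc m)"
    by (auto simp: high_part_eq_empty_iff)
  have "ribbon_coeff (m + k) (mult (Pi_class m P) (Pi_class k {})) C =
      (if low_part m Q = P then 1 else 0) * (if high_part m {a \<in> Q. Suc m < a} = {} then 1 else 0)"
    by (simp add: ribbon_coeff_mult[OF Pi_class_in_Sym_deg Pi_class_in_Sym_deg C]
        ribbon_coeff_Pi_class[OF low_part_subset[OF C]] ribbon_coeff_Pi_class[OF high]
        peaks_low_part peaks_high_part Q_def)
  also have "\<dots> = (if low_part m Q = P \<and> (\<forall>a\<in>Q. a \<le> Suc m) then 1 else 0)"
    by (simp only: no_high) simp
  also have "low_part m Q = P \<and> (\<forall>a\<in>Q. a \<le> Suc m) \<longleftrightarrow> Q = P \<or> Q = insert m P \<or> Q = insert (Suc m) P"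
  proof
    assume Q: "low_part m Q = P \<and> (\<forall>a\<in>Q. a \<le> Suc m)"
    have "\<not> (m \<in> Q \<and> Suc m \<in> Q)"
      by (auto simp: Q_def peaks_def)
    moreover have "Q = P \<union> (Q \<inter> {m, Suc m})"
      using Q by (force simp: low_part_def le_Suc_eq)
    ultimately show "Q = P \<or> Q = insert m P \<or> Q = insert (Suc m) P"
      by (cases "m \<in> Q"; cases "Suc m \<in> Q") auto
  next
    assume "Q = P \<or> Q = insert m P \<or> Q = insert (Suc m) P"
    then show "low_part m Q = P \<and> (\<forall>a\<in>Q. a \<le> Suc m)"
      using P by (auto simp: low_part_def)
  qed
  also have "(if Q = P \<or> Q = insert m P \<or> Q = insert (Suc m) P then 1 else 0) =
      (if Q = P then 1 else 0) + (if Q = insert m P then 1 else 0) + (if Q = insert (Suc m) P then 1 else (0::rat))"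
    using P by auto
  also have "\<dots> = ribbon_coeff (m + k)
      (Pi_class (m + k) P + Pi_class (m + k) (insert m P) + Pi_class (m + k) (insert (Suc m) P)) C"
    by (simp add: ribbon_coeff_add ribbon_coeff_Pi_class[OF C] Q_def)
  finally show "ribbon_coeff (m + k) (mult (Pi_class m P) (Pi_class k {})) C = \<dots>" .
qed

text \<open>Induction on \<open>n + \<Sum>P\<close>: the top peak \<open>q\<close> of \<open>P\<close> is traded for a product of smaller
  degree and for two classes with smaller peaks.\<close>

lemma Pi_class_in_theta_image: "Pi_class n P \<in> theta ` Sym_deg n"
proof (induction "n + \<Sum>P" arbitrary: n P rule: less_induct)
  case less
  consider "P \<notin> peak_sets n" | "P = {}" | "P \<in> peak_sets n" "P \<noteq> {}" by blast
  then show ?case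
  proof cases
    case 1
    then show ?thesis
      using Pi_class_eq_0 VS.subspace_0[OF theta_image_subspace] by simp
  next
    case 2
    then show ?thesis using Pi_class_empty_in_theta_image by simp
  next
    case 3
    have fin: "finite P" using 3 finite_subset by (auto simp: peak_sets_def)
    define q where "q = Max P"
    define m where "m = q - 1"
    define P' where "P' = P - {q}"
    have "q \<in> P" and q_max: "\<And>x. x \<in> P \<Longrightarrow> x \<le> q"
      using fin 3 by (simp_all add: q_def)
    have "q \<in> {2..n-1}" "q - 1 \<notin> P"
      using \<open>q \<in> P\<close> 3 by (auto simp: peak_sets_def)
    then have q: "2 \<le> q" "q < n" "q - 1 \<notin> P" by auto
    have P': "\<forall>x\<in>P'. x < m"
    proof
      fix x assume "x \<in> P'"
      then have "x \<le> q" "x \<noteq> q" "x \<noteq> q - 1"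
        using q_max q(3) by (auto simp: P'_def)
      then show "x < m" unfolding m_def by arith
    qed
    have P: "P = insert (Suc m) P'" "Suc m \<notin> P'" "m \<notin> P'"
      using \<open>q \<in> P\<close> q P' by (auto simp: m_def P'_def)
    have "finite P'" using fin by (simp add: P'_def)
    then have sums: "\<Sum>P = \<Sum>P' + Suc m" "\<Sum>(insert m P') = \<Sum>P' + m"
      using P by simp_all
    have "mult (Pi_class m P') (Pi_class (n - m) {}) \<in> theta ` Sym_deg (m + (n - m))"
      by (intro theta_image_mult less) (use q sums in \<open>auto simp: m_def\<close>)
    moreover have "Pi_class n P' \<in> theta ` Sym_deg n"
      by (rule less) (use sums in simp)
    moreover have "Pi_class n (insert m P') \<in> theta ` Sym_deg n"
      by (rule less) (use sums q in \<open>simp add: m_def\<close>)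
    moreover have "Pi_class n P = mult (Pi_class m P') (Pi_class (n - m) {})
        - Pi_class n P' - Pi_class n (insert m P')"
      using mult_Pi_class_Pi_class_empty[OF P', of "n - m"] q P(1) by (simp add: m_def)
    ultimately show ?thesis
      using q VS.subspace_diff[OF theta_image_subspace] by (simp add: m_def)
  qed
qed

section \<open>Peak-invariant elements\<close>

definition peak_invariant :: "nat \<Rightarrow> sym set" where
  "peak_invariant n = {F \<in> Sym_deg n. \<forall>C D. C \<subseteq> {1..<n} \<longrightarrow> D \<subseteq> {1..<n} \<longrightarrow>
      peaks C = peaks D \<longrightarrow> ribbon_coeff n F C = ribbon_coeff n F D}"

lemma peak_invariantI:
  "F \<in> Sym_deg n \<Longrightarrow> (\<And>C D. C \<subseteq> {1..<n} \<Longrightarrow> D \<subseteq> {1..<n} \<Longrightarrow> peaks C = peaks D \<Longrightarrow>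
    ribbon_coeff n F C = ribbon_coeff n F D) \<Longrightarrow> F \<in> peak_invariant n"
  unfolding peak_invariant_def by blast

lemma peak_invariantD:
  "F \<in> peak_invariant n \<Longrightarrow> C \<subseteq> {1..<n} \<Longrightarrow> D \<subseteq> {1..<n} \<Longrightarrow> peaks C = peaks D \<Longrightarrow>
    ribbon_coeff n F C = ribbon_coeff n F D"
  and peak_invariant_Sym_deg: "F \<in> peak_invariant n \<Longrightarrow> F \<in> Sym_deg n"
  unfolding peak_invariant_def by blast+

lemma peak_invariant_subspace: "VS.subspace (peak_invariant n)"
proof (rule VS.subspaceI)
  show "0 \<in> peak_invariant n"
    by (rule peak_invariantI) simp_all
next
  fix F G assume F: "F \<in> peak_invariant n" and G: "G \<in> peak_invariant n"
  show "F + G \<in> peak_invariant n"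
  proof (rule peak_invariantI)
    show "F + G \<in> Sym_deg n"
      using F G by (intro Sym_deg_add peak_invariant_Sym_deg)
    fix C D assume CD: "C \<subseteq> {1..<n}" "D \<subseteq> {1..<n}" "peaks C = peaks D"
    show "ribbon_coeff n (F + G) C = ribbon_coeff n (F + G) D"
      using peak_invariantD[OF F CD] peak_invariantD[OF G CD] by (simp add: ribbon_coeff_add)
  qed
next
  fix c F assume F: "F \<in> peak_invariant n"
  show "scaleS c F \<in> peak_invariant n"
  proof (rule peak_invariantI)
    show "scaleS c F \<in> Sym_deg n"
      using F by (intro Sym_deg_scale peak_invariant_Sym_deg)
    fix C D assume CD: "C \<subseteq> {1..<n}" "D \<subseteq> {1..<n}" "peaks C = peaks D"
    show "ribbon_coeff n (scaleS c F) C = ribbon_coeff n (scaleS c F) D"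
      using peak_invariantD[OF F CD] by (simp add: ribbon_coeff_scale)
  qed
qed

lemma peak_invariant_mult:
  assumes F: "F \<in> peak_invariant m" and G: "G \<in> peak_invariant k"
  shows "mult F G \<in> peak_invariant (m + k)"
proof (rule peak_invariantI)
  show "mult F G \<in> Sym_deg (m + k)"
    using F G by (simp add: peak_invariant_Sym_deg mult_Sym_deg)
next
  fix C D assume C: "C \<subseteq> {1..<m + k}" and D: "D \<subseteq> {1..<m + k}" and peaks: "peaks C = peaks D"
  have "high_part m C \<subseteq> {1..<k}" "high_part m D \<subseteq> {1..<k}"
    using high_part_subset[OF C, of m] high_part_subset[OF D, of m] by simp_all
  moreover have "peaks (high_part m C) = peaks (high_part m D)"
    using peaks by (simp add: peaks_high_part)
  ultimately have "ribbon_coeff k G (high_part m C) = ribbon_coeff k G (high_part m D)"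
    by (rule peak_invariantD[OF G])
  moreover have "peaks (low_part m C) = peaks (low_part m D)"
    using peaks by (simp add: peaks_low_part)
  then have "ribbon_coeff m F (low_part m C) = ribbon_coeff m F (low_part m D)"
    by (rule peak_invariantD[OF F low_part_subset[OF C] low_part_subset[OF D]])
  ultimately show "ribbon_coeff (m + k) (mult F G) C = ribbon_coeff (m + k) (mult F G) D"
    using peak_invariant_Sym_deg[OF F] peak_invariant_Sym_deg[OF G]
    by (simp add: ribbon_coeff_mult[OF _ _ C] ribbon_coeff_mult[OF _ _ D])
qed

lemma tildeS_peak_invariant: "tildeS n \<in> peak_invariant n"
  by (cases "n = 0") (auto intro!: peak_invariantI simp: tildeS_in_Sym_deg ribbon_coeff_tildeS)

lemma one_peak_invariant: "one_sym \<in> peak_invariant 0"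
proof (rule peak_invariantI[OF one_in_Sym_deg])
  fix C D :: "nat set" assume "C \<subseteq> {1..<0}" "D \<subseteq> {1..<0}"
  then have "C = D" by auto
  then show "ribbon_coeff 0 one_sym C = ribbon_coeff 0 one_sym D" by (rule arg_cong)
qed

lemma theta_image_subset_peak_invariant: "theta ` Sym_deg n \<subseteq> peak_invariant n"
proof
  have thetaS: "thetaS I \<in> peak_invariant (sum_list I)" for I
    by (induct I) (simp_all add: thetaS_Nil thetaS_Cons one_peak_invariant peak_invariant_mult
        tildeS_peak_invariant)
  fix X assume "X \<in> theta ` Sym_deg n"
  then obtain F where F: "F \<in> Sym_deg n" "X = theta F" by auto
  have "theta F \<in> peak_invariant n"
    unfolding theta_expansion[OF finite_comps support_Sym_deg[OF F(1)]]
    by (intro VS.subspace_sum[OF peak_invariant_subspace] VS.subspace_scale[OF peak_invariant_subspace])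
       (use thetaS in \<open>auto simp: comps_def\<close>)
  then show "X \<in> peak_invariant n" using F by simp
qed

text \<open>A peak-invariant element is the combination of the peak classes with its ribbon
  coefficients at the peak sets.\<close>

lemma peak_invariant_subset_Pspace: "peak_invariant n \<subseteq> Pspace n"
proof
  fix F assume F: "F \<in> peak_invariant n"
  define G where "G = (\<Sum>P\<in>peak_sets n. scaleS (ribbon_coeff n F P) (Pi_class n P))"
  have "F = G"
  proof (rule eq_if_ribbon_coeffs_eq)
    show "F \<in> Sym_deg n" using F by (rule peak_invariant_Sym_deg)
    show "G \<in> Sym_deg n" unfolding G_def by (intro Sym_deg_sum Sym_deg_scale Pi_class_in_Sym_deg)
  next
    fix C assume C: "C \<subseteq> {1..<n}"
    have "ribbon_coeff n G C = (\<Sum>P\<in>peak_sets n. ribbon_coeff n F P * (if peaks C = P then 1 else 0))"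
      unfolding G_def by (simp add: ribbon_coeff_sum ribbon_coeff_scale ribbon_coeff_Pi_class[OF C])
    also have "\<dots> = (\<Sum>P\<in>peak_sets n. if peaks C = P then ribbon_coeff n F P else 0)"
      by (intro sum.cong) auto
    also have "\<dots> = ribbon_coeff n F (peaks C)"
      using peaks_in_peak_sets[OF C] finite_peak_sets by (simp add: sum.delta)
    also have "\<dots> = ribbon_coeff n F C"
      using peak_invariantD[OF F peak_set_subset[OF peaks_in_peak_sets[OF C]] C] by (simp add: peaks_idem)
    finally show "ribbon_coeff n F C = ribbon_coeff n G C" by simp
  qed
  moreover have "G \<in> Pspace n"
    unfolding G_def Pspace_def by (intro VS.span_sum VS.span_scale VS.span_base) auto
  ultimately show "F \<in> Pspace n" by simp
qed

theorem theta_image_eq_Pspace: "theta ` Sym_deg n = Pspace n"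
proof
  show "theta ` Sym_deg n \<subseteq> Pspace n"
    using theta_image_subset_peak_invariant peak_invariant_subset_Pspace by blast
  show "Pspace n \<subseteq> theta ` Sym_deg n"
    unfolding Pspace_def
    by (rule VS.span_minimal) (use Pi_class_in_theta_image theta_image_subspace in auto)
qed

section \<open>The dimension of \<open>Pspace n\<close>\<close>

lemma ribbon_coeff_Pi_class_peak_set:
  assumes P: "P \<in> peak_sets n"
  shows "ribbon_coeff n (Pi_class n Q) P = (if Q = P then 1 else 0)"
  using ribbon_coeff_Pi_class[OF peak_set_subset[OF P]] peaks_peak_set[OF P] by auto

lemma inj_on_Pi_class: "inj_on (Pi_class n) (peak_sets n)"
proof (rule inj_onI)
  fix P Q assume P: "P \<in> peak_sets n" and eq: "Pi_class n P = Pi_class n Q"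
  have "ribbon_coeff n (Pi_class n Q) P = 1"
    using ribbon_coeff_Pi_class_peak_set[OF P, of P] eq by simp
  then show "P = Q"
    using ribbon_coeff_Pi_class_peak_set[OF P, of Q] by (simp split: if_splits)
qed

lemma independent_Pi_classes: "VS.independent (Pi_class n ` peak_sets n)"
proof (rule VS.independent_if_scalars_zero)
  show "finite (Pi_class n ` peak_sets n)" using finite_peak_sets by simp
next
  fix f X assume zero: "(\<Sum>Y\<in>Pi_class n ` peak_sets n. scaleS (f Y) Y) = 0"
    and "X \<in> Pi_class n ` peak_sets n"
  then obtain P where P: "P \<in> peak_sets n" "X = Pi_class n P" by auto
  have "0 = ribbon_coeff n (\<Sum>Y\<in>Pi_class n ` peak_sets n. scaleS (f Y) Y) P"
    using zero by simp
  also have "\<dots> = (\<Sum>Q\<in>peak_sets n. f (Pi_class n Q) * (if Q = P then 1 else 0))"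
    by (simp add: ribbon_coeff_sum ribbon_coeff_scale sum.reindex[OF inj_on_Pi_class]
        ribbon_coeff_Pi_class_peak_set[OF P(1)])
  also have "\<dots> = f X"
    using P finite_peak_sets by (simp add: if_distrib sum.delta' cong: if_cong)
  finally show "f X = 0" by simp
qed

lemma dim_Pspace_eq_card: "VS.dim (Pspace n) = card (peak_sets n)"
  unfolding Pspace_def VS.dim_span_eq_card_independent[OF independent_Pi_classes]
  by (rule card_image[OF inj_on_Pi_class])

lemma peak_sets_le_2: "n \<le> 2 \<Longrightarrow> peak_sets n = {{}}"
  by (auto simp: peak_sets_def)

text \<open>A peak set in \<open>[2, n+2]\<close> either avoids \<open>n + 2\<close>, or contains it and then avoids \<open>n + 1\<close>.\<close>

lemma peak_sets_add_3: "peak_sets (n + 3) = peak_sets (n + 2) \<union> insert (n + 2) ` peak_sets (n + 1)"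
proof (intro set_eqI iffI)
  fix P assume P: "P \<in> peak_sets (n + 3)"
  then have sub: "P \<subseteq> {2..n+2}" and sep: "\<forall>a\<in>P. a - 1 \<notin> P"
    by (auto simp: peak_sets_def)
  show "P \<in> peak_sets (n + 2) \<union> insert (n + 2) ` peak_sets (n + 1)"
  proof (cases "n + 2 \<in> P")
    case False
    then have "P \<subseteq> {2..n+1}" using sub by (auto simp: subset_iff le_Suc_eq)
    then show ?thesis using sep by (simp add: peak_sets_def)
  next
    case True
    then have "n + 1 \<notin> P" using sep by force
    then have "P - {n + 2} \<subseteq> {2..n}" using sub by (auto simp: subset_iff le_Suc_eq)
    then have "P - {n + 2} \<in> peak_sets (n + 1)" using sep by (simp add: peak_sets_def)
    moreover have "P = insert (n + 2) (P - {n + 2})" using True by blast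
    ultimately show ?thesis by blast
  qed
next
  fix P assume "P \<in> peak_sets (n + 2) \<union> insert (n + 2) ` peak_sets (n + 1)"
  then consider "P \<subseteq> {2..n+1}" "\<forall>a\<in>P. a - 1 \<notin> P"
    | Q where "P = insert (n + 2) Q" "Q \<subseteq> {2..n}" "\<forall>a\<in>Q. a - 1 \<notin> Q"
    by (auto simp: peak_sets_def)
  then show "P \<in> peak_sets (n + 3)"
  proof cases
    case 1
    then show ?thesis by (auto simp: peak_sets_def)
  next
    case 2
    have "n + 1 \<notin> Q" "n + 2 \<notin> Q" using 2 by auto
    moreover have "a - 1 \<noteq> n + 2" if "a \<in> Q" for a using subsetD[OF 2(2) that] by auto
    ultimately show ?thesis using 2 by (auto simp: peak_sets_def)
  qed
qed

lemma card_peak_sets: "card (peak_sets n) = fib_f n"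
proof (induct n rule: fib_f.induct)
  case (4 k)
  have "peak_sets (k + 2) \<inter> insert (k + 2) ` peak_sets (k + 1) = {}"
    by (auto simp: peak_sets_def)
  moreover have "inj_on (insert (k + 2)) (peak_sets (k + 1))"
  proof (rule inj_onI)
    fix P Q assume "P \<in> peak_sets (k + 1)" "Q \<in> peak_sets (k + 1)" "insert (k + 2) P = insert (k + 2) Q"
    moreover from calculation have "k + 2 \<notin> P" "k + 2 \<notin> Q"
      using peak_set_subset[of P "k + 1"] peak_set_subset[of Q "k + 1"] by auto
    ultimately show "P = Q" by (simp add: insert_ident)
  qed
  ultimately have "card (peak_sets (k + 3)) = card (peak_sets (k + 2)) + card (peak_sets (k + 1))"
    by (simp add: peak_sets_add_3 card_Un_disjoint finite_peak_sets card_image)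
  then show ?case using 4 by (simp add: numeral_eq_Suc)
qed (simp_all add: peak_sets_le_2 numeral_eq_Suc)

section \<open>Compositions into odd parts\<close>

definition odd_comps :: "nat \<Rightarrow> nat list set" where
  "odd_comps n = {I \<in> comps n. \<forall>i\<in>set I. odd i}"

definition bump_head :: "nat list \<Rightarrow> nat list" where
  "bump_head I = (hd I + 2) # tl I"

lemma finite_odd_comps: "finite (odd_comps n)"
  unfolding odd_comps_def using finite_comps by simp

lemma Cons_in_odd_comps_iff:
  "a # I \<in> odd_comps n \<longleftrightarrow> odd a \<and> a \<le> n \<and> I \<in> odd_comps (n - a)"
  by (auto simp: odd_comps_def Cons_in_comps_iff odd_pos)

lemma odd_comps_0: "odd_comps 0 = {[]}"
  by (auto simp: odd_comps_def comps_0)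

lemma Nil_notin_odd_comps: "0 < n \<Longrightarrow> [] \<notin> odd_comps n"
  by (simp add: odd_comps_def comps_def)

lemma odd_comps_1: "odd_comps 1 = {[1]}"
proof (intro set_eqI)
  have "a # J \<in> odd_comps 1 \<longleftrightarrow> a = 1 \<and> J = []" for a J
    by (auto simp: Cons_in_odd_comps_iff odd_comps_0 le_Suc_eq)
  then show "I \<in> odd_comps 1 \<longleftrightarrow> I \<in> {[1]}" for I
    using Nil_notin_odd_comps[of 1] by (cases I) auto
qed

lemma odd_comps_2: "odd_comps 2 = {[1, 1]}"
proof (intro set_eqI)
  have "a # J \<in> odd_comps 2 \<longleftrightarrow> a = 1 \<and> J = [1]" for a J
  proof -
    have "odd a \<and> a \<le> 2 \<longleftrightarrow> a = 1" by presburger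
    then have "a # J \<in> odd_comps 2 \<longleftrightarrow> a = 1 \<and> J \<in> odd_comps (2 - a)"
      by (simp only: Cons_in_odd_comps_iff conj_assoc[symmetric])
    then show ?thesis by (cases "a = 1") (simp_all add: odd_comps_1[unfolded One_nat_def])
  qed
  then show "I \<in> odd_comps 2 \<longleftrightarrow> I \<in> {[1, 1]}" for I
    using Nil_notin_odd_comps[of 2] by (cases I) auto
qed

text \<open>An odd composition of \<open>n + 2\<close> starts with \<open>1\<close>, or with a part \<open>\<ge> 3\<close> that can be
  lowered by \<open>2\<close>.\<close>

lemma odd_comps_add_2:
  assumes "1 \<le> n"
  shows "odd_comps (n + 2) = Cons 1 ` odd_comps (n + 1) \<union> bump_head ` odd_comps n"
proof (intro set_eqI iffI)
  fix I assume I: "I \<in> odd_comps (n + 2)"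
  then obtain a J where aJ: "I = a # J" using Nil_notin_odd_comps by (cases I) auto
  then have a: "odd a" "a \<le> n + 2" "J \<in> odd_comps (n + 2 - a)"
    using I by (simp_all add: Cons_in_odd_comps_iff)
  show "I \<in> Cons 1 ` odd_comps (n + 1) \<union> bump_head ` odd_comps n"
  proof (cases "a = 1")
    case True
    then show ?thesis using a aJ by simp
  next
    case False
    with a have "3 \<le> a" by presburger
    then have "(a - 2) # J \<in> odd_comps n" "bump_head ((a - 2) # J) = I"
      using a aJ by (simp_all add: Cons_in_odd_comps_iff bump_head_def)
    then show ?thesis by blast
  qed
next
  fix I assume "I \<in> Cons 1 ` odd_comps (n + 1) \<union> bump_head ` odd_comps n"
  then show "I \<in> odd_comps (n + 2)"
  proof
    assume "I \<in> Cons 1 ` odd_comps (n + 1)"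
    then show ?thesis by (auto simp: Cons_in_odd_comps_iff)
  next
    assume "I \<in> bump_head ` odd_comps n"
    then obtain K where K: "K \<in> odd_comps n" "I = bump_head K" by blast
    moreover obtain a J where "K = a # J"
      using K(1) Nil_notin_odd_comps assms by (cases K) auto
    ultimately show ?thesis by (simp add: Cons_in_odd_comps_iff bump_head_def)
  qed
qed

lemma card_odd_comps: "1 \<le> n \<Longrightarrow> card (odd_comps n) = fib_f n"
proof (induct n rule: fib_f.induct)
  case (4 k)
  have "Cons 1 ` odd_comps (k + 2) \<inter> bump_head ` odd_comps (k + 1) = {}"
    by (auto simp: bump_head_def)
  moreover have "inj_on bump_head (odd_comps (k + 1))"
  proof (rule inj_onI)
    fix I J assume IJ: "I \<in> odd_comps (k + 1)" "J \<in> odd_comps (k + 1)"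
      and eq: "bump_head I = bump_head J"
    have "I \<noteq> []" "J \<noteq> []" using IJ Nil_notin_odd_comps[of "k + 1"] by auto
    moreover have "hd I = hd J" "tl I = tl J" using eq by (simp_all add: bump_head_def)
    ultimately show "I = J" by (metis list.collapse)
  qed
  moreover have "odd_comps (k + 3) = Cons 1 ` odd_comps (k + 2) \<union> bump_head ` odd_comps (k + 1)"
    using odd_comps_add_2[of "k + 1"] by (simp add: eval_nat_numeral)
  ultimately have "card (odd_comps (k + 3)) = card (odd_comps (k + 2)) + card (odd_comps (k + 1))"
    by (simp add: card_Un_disjoint finite_odd_comps card_image)
  then show ?case using 4 by (simp add: numeral_eq_Suc)
qed (simp_all add: odd_comps_1[unfolded One_nat_def] odd_comps_2[unfolded numeral_2_eq_2])

lemma Sym_sum: "(\<And>i. i \<in> A \<Longrightarrow> f i \<in> Sym) \<Longrightarrow> sum f A \<in> Sym"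
proof -
  assume f: "\<And>i. i \<in> A \<Longrightarrow> f i \<in> Sym"
  have "finsupp (sum f A)" using f by (intro finsupp_sum) (simp add: Sym_def)
  moreover have "0 \<notin> set I" if "sum f A I \<noteq> 0" for I
  proof -
    obtain i where "i \<in> A" "f i I \<noteq> 0"
      using \<open>sum f A I \<noteq> 0\<close> unfolding sum_fun_apply by (meson sum.not_neutral_contains_not_neutral)
    then show ?thesis using f by (auto simp: Sym_def)
  qed
  ultimately show "sum f A \<in> Sym" by (simp add: Sym_def)
qed

lemma hom_comp_in_Sym_deg: "F \<in> Sym \<Longrightarrow> hom_comp n F \<in> Sym_deg n"
  by (auto simp: hom_comp_def Sym_deg_def comps_def Sym_def split: if_splits)

lemma hom_comp_sum: "hom_comp n (sum f A) = (\<Sum>i\<in>A. hom_comp n (f i))"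
  by (rule ext) (simp add: hom_comp_def sum_fun_apply)

lemma hom_comp_Sym_deg: "F \<in> Sym_deg m \<Longrightarrow> hom_comp n F = (if m = n then F else 0)"
  by (rule ext) (auto simp: hom_comp_def Sym_deg_def comps_def)

lemma sum_hom_comp:
  assumes "finite N" "sum_list ` {I. F I \<noteq> 0} \<subseteq> N"
  shows "(\<Sum>n\<in>N. hom_comp n F) = F"
proof
  fix I
  have "(\<Sum>n\<in>N. hom_comp n F) I = (if sum_list I \<in> N then F I else 0)"
    using assms(1) by (simp add: sum_fun_apply hom_comp_def sum.delta)
  then show "(\<Sum>n\<in>N. hom_comp n F) I = F I" using assms(2) by auto
qed

lemma finsupp_Sym: "F \<in> Sym \<Longrightarrow> finsupp F"
  by (simp add: Sym_def)

lemma finite_degrees: "F \<in> Sym \<Longrightarrow> finite (sum_list ` {I. F I \<noteq> 0})"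
  by (simp add: Sym_def)

lemma theta_in_Sym_deg: "F \<in> Sym_deg n \<Longrightarrow> theta F \<in> Sym_deg n"
  using theta_image_subset_peak_invariant peak_invariant_Sym_deg by blast

lemma mult_in_Sym:
  assumes F: "F \<in> Sym" and G: "G \<in> Sym"
  shows "mult F G \<in> Sym"
proof -
  define M where "M = sum_list ` {I. F I \<noteq> 0}"
  define N where "N = sum_list ` {I. G I \<noteq> 0}"
  have "(\<Sum>m\<in>M. hom_comp m F) = F" "(\<Sum>n\<in>N. hom_comp n G) = G"
    using finite_degrees[OF F] finite_degrees[OF G] by (simp_all add: M_def N_def sum_hom_comp)
  then have "mult F G = mult (\<Sum>m\<in>M. hom_comp m F) (\<Sum>n\<in>N. hom_comp n G)"
    by simp
  also have "\<dots> = (\<Sum>m\<in>M. \<Sum>n\<in>N. mult (hom_comp m F) (hom_comp n G))"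
    by (subst mult_sum_left) (simp only: mult_sum_right)
  also have "\<dots> \<in> Sym"
    using Sym_deg_subset_Sym mult_Sym_deg[OF hom_comp_in_Sym_deg[OF F] hom_comp_in_Sym_deg[OF G]]
    by (intro Sym_sum) blast
  finally show ?thesis .
qed

theorem theta_image_Sym_eq_Pall: "theta ` Sym = Pall"
proof
  show "theta ` Sym \<subseteq> Pall"
  proof
    fix X assume "X \<in> theta ` Sym"
    then obtain F where F: "F \<in> Sym" "X = theta F" by auto
    define N where "N = sum_list ` {I. F I \<noteq> 0}"
    define Y where "Y m = theta (hom_comp m F)" for m
    have Y: "Y m \<in> Sym_deg m" "Y m \<in> Pspace m" for m
      unfolding Y_def using hom_comp_in_Sym_deg[OF F(1)] theta_image_eq_Pspace[of m]
      by (auto intro: theta_in_Sym_deg)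
    have "X = theta (\<Sum>m\<in>N. hom_comp m F)"
      using F finite_degrees[OF F(1)] by (simp add: N_def sum_hom_comp)
    also have "\<dots> = (\<Sum>m\<in>N. Y m)"
      unfolding Y_def using hom_comp_in_Sym_deg[OF F(1)] finsupp_Sym_deg by (blast intro: theta_sum)
    finally have X: "X = (\<Sum>m\<in>N. Y m)" .
    have "hom_comp n X \<in> Pspace n" for n
    proof -
      have "hom_comp n X = (\<Sum>m\<in>N. if m = n then Y m else 0)"
        by (simp add: X hom_comp_sum hom_comp_Sym_deg[OF Y(1)])
      also have "\<dots> = (if n \<in> N then Y n else 0)"
        using finite_degrees[OF F(1)] by (simp add: N_def)
      finally show ?thesis
        using Y(2) VS.span_zero by (simp add: Pspace_def)
    qed
    moreover have "X \<in> Sym" using Y Sym_deg_subset_Sym by (auto simp: X intro!: Sym_sum)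
    ultimately show "X \<in> Pall" by (simp add: Pall_def)
  qed
next
  show "Pall \<subseteq> theta ` Sym"
  proof
    fix F assume F: "F \<in> Pall"
    then have "\<forall>n. \<exists>G \<in> Sym_deg n. hom_comp n F = theta G"
      by (simp add: Pall_def theta_image_eq_Pspace[symmetric] image_iff)
    then obtain G where G: "\<And>n. G n \<in> Sym_deg n" "\<And>n. hom_comp n F = theta (G n)"
      by metis
    define N where "N = sum_list ` {I. F I \<noteq> 0}"
    have "finite N" using F by (simp add: N_def Pall_def finite_degrees)
    have "theta (\<Sum>n\<in>N. G n) = (\<Sum>n\<in>N. hom_comp n F)"
      by (simp add: theta_sum finsupp_Sym_deg[OF G(1)] G(2))
    also have "\<dots> = F"
      using \<open>finite N\<close> by (rule sum_hom_comp) (simp add: N_def)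
    finally show "F \<in> theta ` Sym"
      using G Sym_deg_subset_Sym by (blast intro: Sym_sum)
  qed
qed

lemma one_in_Pall: "one_sym \<in> Pall"
proof -
  have "theta one_sym \<in> theta ` Sym" using one_in_Sym_deg Sym_deg_subset_Sym by blast
  then show ?thesis by (simp only: theta_one theta_image_Sym_eq_Pall)
qed

lemma mult_in_Pall:
  assumes "F \<in> Pall" "G \<in> Pall"
  shows "mult F G \<in> Pall"
proof -
  obtain F' G' where FG: "F' \<in> Sym" "G' \<in> Sym" "F = theta F'" "G = theta G'"
    using assms unfolding theta_image_Sym_eq_Pall[symmetric] by blast
  then have "mult F G = theta (mult F' G')" by (simp add: theta_mult finsupp_Sym)
  then have "mult F G \<in> theta ` Sym" using mult_in_Sym[OF FG(1,2)] by blast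
  then show ?thesis by (simp only: theta_image_Sym_eq_Pall)
qed

lemma tensor_sum_left: "tensor (sum f A) v = (\<Sum>i\<in>A. tensor (f i) v)"
  by (rule ext) (auto simp: tensor_def sum_fun_apply sum_distrib_right)

lemma tensor_sum_right: "tensor u (sum f A) = (\<Sum>i\<in>A. tensor u (f i))"
  by (rule ext) (auto simp: tensor_def sum_fun_apply sum_distrib_left)

lemma tensor_scale_left: "tensor (scaleS c u) v = scaleT c (tensor u v)"
  by (rule ext) (auto simp: tensor_def scaleS_def scaleT_def)

lemma tensor_scale_right: "tensor u (scaleS c v) = scaleT c (tensor u v)"
  by (rule ext) (auto simp: tensor_def scaleS_def scaleT_def)

lemma tensor_zero_left [simp]: "tensor 0 v = 0"
  by (rule ext) (auto simp: tensor_def)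

lemma tensor_zero_right [simp]: "tensor u 0 = 0"
  by (rule ext) (auto simp: tensor_def)

lemma tmult_add_left: "tmult (F + G) H = tmult F H + tmult G H"
  by (rule ext) (auto simp: tmult_def algebra_simps sum.distrib)

lemma tmult_add_right: "tmult F (G + H) = tmult F G + tmult F H"
  by (rule ext) (auto simp: tmult_def algebra_simps sum.distrib)

lemma tmult_scale_left: "tmult (scaleT c F) G = scaleT c (tmult F G)"
  by (rule ext) (auto simp: tmult_def scaleT_def sum_distrib_left mult.assoc)

lemma tmult_scale_right: "tmult F (scaleT c G) = scaleT c (tmult F G)"
  by (rule ext) (auto simp: tmult_def scaleT_def sum_distrib_left mult.left_commute)

lemma tmult_zero_left [simp]: "tmult 0 G = 0"
  by (rule ext) (auto simp: tmult_def)

lemma tmult_zero_right [simp]: "tmult F 0 = 0"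
  by (rule ext) (auto simp: tmult_def)

lemma tmult_sum_left: "tmult (sum f A) G = (\<Sum>i\<in>A. tmult (f i) G)"
proof (cases "finite A")
  case True
  then show ?thesis
  proof (induct A)
    case (insert x A) then show ?case by (simp only: sum.insert[OF insert(1,2)] tmult_add_left)
  qed (simp only: sum.empty tmult_zero_left)
next
  case False
  then show ?thesis by (simp only: sum.infinite[OF False] tmult_zero_left)
qed

lemma tmult_sum_right: "tmult G (sum f A) = (\<Sum>i\<in>A. tmult G (f i))"
proof (cases "finite A")
  case True
  then show ?thesis
  proof (induct A)
    case (insert x A) then show ?case by (simp only: sum.insert[OF insert(1,2)] tmult_add_right)
  qed (simp only: sum.empty tmult_zero_right)
next
  case False
  then show ?thesis by (simp only: sum.infinite[OF False] tmult_zero_right)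
qed

lemma tensor_apply: "tensor u v (A, B) = u A * v B"
  by (simp add: tensor_def)

lemma tmult_apply: "tmult F G (A, B) =
    (\<Sum>i\<le>length A. \<Sum>j\<le>length B. F (take i A, take j B) * G (drop i A, drop j B))"
  by (simp add: tmult_def)

lemma tmult_tensor: "tmult (tensor a b) (tensor c d) = tensor (mult a c) (mult b d)"
proof (rule ext, clarify)
  fix A B :: "nat list"
  have "tmult (tensor a b) (tensor c d) (A, B) =
      (\<Sum>i\<le>length A. \<Sum>j\<le>length B. (a (take i A) * c (drop i A)) * (b (take j B) * d (drop j B)))"
    by (simp add: tmult_apply tensor_apply mult_ac)
  also have "\<dots> = tensor (mult a c) (mult b d) (A, B)"
    by (simp add: tensor_apply mult_def sum_product)
  finally show "tmult (tensor a b) (tensor c d) (A, B) = tensor (mult a c) (mult b d) (A, B)" .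
qed

lemma sum_indicator_mult:
  "(\<Sum>i\<le>(n::nat). (if i = k then 1 else 0) * (f i :: rat)) = (if k \<le> n then f k else 0)"
proof -
  have "(\<Sum>i\<le>n. (if i = k then 1 else 0) * f i) = (\<Sum>i\<le>n. if i = k then f i else 0)"
    by (rule sum.cong) auto
  then show ?thesis by (simp add: sum.delta)
qed

lemma tmult_one_left: "tmult (tensor one_sym one_sym) X = X"
proof (rule ext, clarify)
  fix A B :: "nat list"
  have "tmult (tensor one_sym one_sym) X (A, B) = (\<Sum>i\<le>length A. (if i = 0 then 1 else 0) *
      (\<Sum>j\<le>length B. (if j = 0 then 1 else 0) * X (drop i A, drop j B)))"
    unfolding tmult_apply tensor_apply one_sym_def sum_distrib_left
    by (intro sum.cong refl) (auto simp: SI_def)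
  then show "tmult (tensor one_sym one_sym) X (A, B) = X (A, B)"
    by (simp add: sum_indicator_mult)
qed

lemma tmult_one_right: "tmult X (tensor one_sym one_sym) = X"
proof (rule ext, clarify)
  fix A B :: "nat list"
  have "tmult X (tensor one_sym one_sym) (A, B) = (\<Sum>i\<le>length A. (if i = length A then 1 else 0) *
      (\<Sum>j\<le>length B. (if j = length B then 1 else 0) * X (take i A, take j B)))"
    unfolding tmult_apply tensor_apply one_sym_def sum_distrib_left
    by (intro sum.cong refl) (auto simp: SI_def mult_ac)
  then show "tmult X (tensor one_sym one_sym) (A, B) = X (A, B)"
    by (simp add: sum_indicator_mult)
qed

lemma sum_square_shift:
  "(\<Sum>i\<le>(a::nat). \<Sum>j\<le>(b::nat). \<Sum>i'\<le>i. \<Sum>j'\<le>j. f i j i' j') =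
   (\<Sum>i'\<le>a. \<Sum>j'\<le>b. \<Sum>k\<le>a-i'. \<Sum>l\<le>b-j'. f (i'+k) (j'+l) i' j')"
proof -
  have "(\<Sum>i\<le>a. \<Sum>j\<le>b. \<Sum>i'\<le>i. \<Sum>j'\<le>j. f i j i' j') =
      (\<Sum>i\<le>a. \<Sum>i'\<le>i. \<Sum>j\<le>b. \<Sum>j'\<le>j. f i j i' j')"
    by (rule sum.cong[OF refl], rule sum.swap)
  also have "\<dots> = (\<Sum>i'\<le>a. \<Sum>k\<le>a-i'. \<Sum>j\<le>b. \<Sum>j'\<le>j. f (i'+k) j i' j')"
    by (rule sum_triangle_shift)
  also have "\<dots> = (\<Sum>i'\<le>a. \<Sum>k\<le>a-i'. \<Sum>j'\<le>b. \<Sum>l\<le>b-j'. f (i'+k) (j'+l) i' j')"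
    by (rule sum.cong[OF refl], rule sum.cong[OF refl], rule sum_triangle_shift)
  also have "\<dots> = (\<Sum>i'\<le>a. \<Sum>j'\<le>b. \<Sum>k\<le>a-i'. \<Sum>l\<le>b-j'. f (i'+k) (j'+l) i' j')"
    by (rule sum.cong[OF refl], rule sum.swap)
  finally show ?thesis .
qed

lemma tmult_assoc: "tmult (tmult F G) H = tmult F (tmult G H)"
proof (rule ext, clarify)
  fix A B :: "nat list"
  have "tmult (tmult F G) H (A, B) =
     (\<Sum>i\<le>length A. \<Sum>j\<le>length B. \<Sum>i'\<le>i. \<Sum>j'\<le>j. F (take i' A, take j' B) *
        G (drop i' (take i A), drop j' (take j B)) * H (drop i A, drop j B))"
    unfolding tmult_apply
    by (intro sum.cong refl) (auto simp: sum_distrib_right min_absorb1 intro!: sum.cong)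
  also have "\<dots> = (\<Sum>i'\<le>length A. \<Sum>j'\<le>length B. \<Sum>k\<le>length A-i'. \<Sum>l\<le>length B-j'.
      F (take i' A, take j' B) * G (drop i' (take (i'+k) A), drop j' (take (j'+l) B)) *
      H (drop (i'+k) A, drop (j'+l) B))"
    by (rule sum_square_shift)
  also have "\<dots> = tmult F (tmult G H) (A, B)"
    unfolding tmult_apply
    by (intro sum.cong refl) (auto simp: sum_distrib_left drop_take add.commute mult.assoc intro!: sum.cong)
  finally show "tmult (tmult F G) H (A, B) = tmult F (tmult G H) (A, B)" .
qed

section \<open>The coproduct\<close>

lemma finsupp_mult: "finsupp F \<Longrightarrow> finsupp G \<Longrightarrow> finsupp (mult F G)"
  by (subst mult_expansion[of "{I. F I \<noteq> 0}" F "{I. G I \<noteq> 0}" G])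
     (auto intro!: finsupp_sum finsupp_scale finsupp_SI)

lemma Delta_sum:
  "(\<And>i. i \<in> A \<Longrightarrow> finsupp (f i)) \<Longrightarrow> Delta (sum f A) = (\<Sum>i\<in>A. Delta (f i))"
  by (simp add: Delta_eq_lin_ext lin_ext_sum)

lemma Delta_scale: "finsupp F \<Longrightarrow> Delta (scaleS c F) = scaleT c (Delta F)"
  by (simp only: Delta_eq_lin_ext lin_ext_scale) (simp add: scaleT_def)

lemma Delta_SI: "Delta (SI I) = DeltaS I"
  by (simp add: Delta_eq_lin_ext lin_ext_SI)

lemma Delta_expansion:
  "finite A \<Longrightarrow> {I. F I \<noteq> 0} \<subseteq> A \<Longrightarrow> Delta F = (\<Sum>I\<in>A. scaleT (F I) (DeltaS I))"
  by (rule ext) (simp add: Delta_eq_lin_ext lin_ext_apply scaleT_def sum_fun_apply)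

lemma DeltaS_append: "DeltaS (I @ J) = tmult (DeltaS I) (DeltaS J)"
  by (induct I) (simp_all add: tmult_one_left tmult_assoc)

lemma Delta_mult:
  assumes F: "finsupp F" and G: "finsupp G"
  shows "Delta (mult F G) = tmult (Delta F) (Delta G)"
proof -
  define A where "A = {I. F I \<noteq> 0}"
  define B where "B = {I. G I \<noteq> 0}"
  have A: "finite A" "{I. F I \<noteq> 0} \<subseteq> A" and B: "finite B" "{I. G I \<noteq> 0} \<subseteq> B"
    using F G by (auto simp: A_def B_def)
  have "Delta (mult F G) = (\<Sum>I\<in>A. \<Sum>J\<in>B. scaleT (F I * G J) (tmult (DeltaS I) (DeltaS J)))"
    by (simp add: mult_expansion[OF A B] Delta_sum finsupp_sum finsupp_SI finsupp_scale Delta_scale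
        Delta_SI DeltaS_append)
  also have "\<dots> = tmult (\<Sum>I\<in>A. scaleT (F I) (DeltaS I)) (\<Sum>J\<in>B. scaleT (G J) (DeltaS J))"
    by (subst tmult_sum_left) (simp add: tmult_sum_right tmult_scale_left tmult_scale_right mult.commute)
  also have "\<dots> = tmult (Delta F) (Delta G)"
    by (simp only: Delta_expansion[OF A] Delta_expansion[OF B])
  finally show ?thesis .
qed

lemma Delta_one: "Delta one_sym = tensor one_sym one_sym"
  by (simp add: one_sym_def Delta_SI)

text \<open>\<open>conv u v\<close> is the coefficient sequence of the product of the generating series
  \<open>\<Sum> u_n t^n\<close> and \<open>\<Sum> v_n t^n\<close>; the series of \<open>u\<close> is group-like iff
  \<open>Delta (u n) = tensor_conv u n\<close> for all \<open>n\<close>.\<close>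

definition conv :: "(nat \<Rightarrow> sym) \<Rightarrow> (nat \<Rightarrow> sym) \<Rightarrow> nat \<Rightarrow> sym" where
  "conv u v n = (\<Sum>k\<le>n. mult (u k) (v (n - k)))"

definition tensor_conv :: "(nat \<Rightarrow> sym) \<Rightarrow> nat \<Rightarrow> sym2" where
  "tensor_conv u n = (\<Sum>k\<le>n. tensor (u k) (u (n - k)))"

lemma sum_triangle_swap: "(\<Sum>b\<le>(N::nat). \<Sum>c\<le>N-b. f b c) = (\<Sum>c\<le>N. \<Sum>b\<le>N-c. f b c)"
proof -
  have "(\<Sum>b\<le>N. \<Sum>c\<le>N-b. f b c) = (\<Sum>(b,c)\<in>(SIGMA b:{..N}. {..N-b}). f b c)"
    by (rule sum.Sigma) simp_all
  also have "\<dots> = (\<Sum>(c,b)\<in>(SIGMA c:{..N}. {..N-c}). f b c)"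
    by (rule sum.reindex_bij_witness[where i="\<lambda>(c,b). (b,c)" and j="\<lambda>(b,c). (c,b)"]) auto
  also have "\<dots> = (\<Sum>c\<le>N. \<Sum>b\<le>N-c. f b c)"
    by (rule sum.Sigma[symmetric]) simp_all
  finally show ?thesis .
qed

text \<open>Both sides sum \<open>g a b c\<close> over all \<open>a + b + c \<le> n\<close>.\<close>

lemma sum_simplex_reindex:
  "(\<Sum>j\<le>(n::nat). \<Sum>a\<le>j. \<Sum>c\<le>n-j. g a (j-a) c) = (\<Sum>p\<le>n. \<Sum>a\<le>p. \<Sum>b\<le>n-p. g a b (p-a))"
proof -
  have "(\<Sum>j\<le>n. \<Sum>a\<le>j. \<Sum>c\<le>n-j. g a (j-a) c) = (\<Sum>a\<le>n. \<Sum>b\<le>n-a. \<Sum>c\<le>(n-a)-b. g a b c)"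
    using sum_triangle_shift[where n=n and f="\<lambda>a j. \<Sum>c\<le>n-j. g a (j-a) c"] by (simp add: diff_diff_left)
  also have "\<dots> = (\<Sum>a\<le>n. \<Sum>c\<le>n-a. \<Sum>b\<le>(n-a)-c. g a b c)"
    by (rule sum.cong[OF refl], rule sum_triangle_swap)
  also have "\<dots> = (\<Sum>p\<le>n. \<Sum>a\<le>p. \<Sum>b\<le>n-p. g a b (p-a))"
    using sum_triangle_shift[where n=n and f="\<lambda>a p. \<Sum>b\<le>n-p. g a b (p-a)"] by (simp add: diff_diff_left)
  finally show ?thesis .
qed

text \<open>The product of group-like series is group-like, as a formal identity.\<close>

lemma tmult_tensor_conv:
  "(\<Sum>k\<le>n. tmult (tensor_conv u k) (tensor_conv v (n - k))) = tensor_conv (conv u v) n"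
proof -
  define g where "g a b c = tensor (mult (u a) (v c)) (mult (u b) (v (n - a - b - c)))" for a b c
  have "(\<Sum>k\<le>n. tmult (tensor_conv u k) (tensor_conv v (n - k))) = (\<Sum>k\<le>n. \<Sum>a\<le>k. \<Sum>c\<le>n-k. g a (k-a) c)"
  proof (rule sum.cong[OF refl])
    fix k assume "k \<in> {..n}"
    then show "tmult (tensor_conv u k) (tensor_conv v (n - k)) = (\<Sum>a\<le>k. \<Sum>c\<le>n-k. g a (k-a) c)"
      unfolding tensor_conv_def g_def
      by (subst tmult_sum_left) (simp add: tmult_sum_right tmult_tensor diff_diff_left)
  qed
  also have "\<dots> = (\<Sum>p\<le>n. \<Sum>a\<le>p. \<Sum>b\<le>n-p. g a b (p-a))"
    by (rule sum_simplex_reindex)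
  also have "\<dots> = tensor_conv (conv u v) n"
    unfolding tensor_conv_def conv_def
  proof (rule sum.cong[OF refl])
    fix p assume "p \<in> {..n}"
    then show "(\<Sum>a\<le>p. \<Sum>b\<le>n-p. g a b (p-a)) =
        tensor (\<Sum>a\<le>p. mult (u a) (v (p - a))) (\<Sum>b\<le>n - p. mult (u b) (v (n - p - b)))"
      by (subst tensor_sum_left) (auto simp: tensor_sum_right g_def add.commute intro!: sum.cong)
  qed
  finally show ?thesis .
qed

lemma Delta_conv:
  assumes "\<And>n. finsupp (u n)" "\<And>n. finsupp (v n)"
  shows "Delta (conv u v n) = (\<Sum>k\<le>n. tmult (Delta (u k)) (Delta (v (n - k))))"
  unfolding conv_def using assms by (simp add: Delta_sum Delta_mult finsupp_mult)

lemma Delta_Sn: "Delta (Sn n) = tensor_conv Sn n"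
  by (cases "n = 0") (simp_all add: tensor_conv_def Sn_0 Delta_one, simp add: Sn_def Delta_SI tmult_one_right)

lemma ribbon_coeff_Sn_Lambda:
  assumes j: "j \<le> k" and C: "C \<subseteq> {1..<k}"
  shows "ribbon_coeff k (mult (Sn j) (Lambda (k - j))) C = (if C = {j<..<k} \<or> C = {j..<k} then 1 else 0)"
proof -
  have high: "high_part j C \<subseteq> {1..<k - j}" by (rule high_part_subset[OF C])
  have "ribbon_coeff k (mult (Sn j) (Lambda (k - j))) C =
      ribbon_coeff j (Sn j) (low_part j C) * ribbon_coeff (k - j) (Lambda (k - j)) (high_part j C)"
    using ribbon_coeff_mult[OF Sn_in_Sym_deg Lambda_in_Sym_deg, of C j "k - j"] j C by simp
  also have "\<dots> = (if (\<forall>x\<in>C. j \<le> x) \<and> high_part j C = {1..<k - j} then 1 else 0)"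
    by (simp add: ribbon_coeff_Lambda[OF high] ribbon_coeff_Sn low_part_eq_empty_iff)
  also have "(\<forall>x\<in>C. j \<le> x) \<and> high_part j C = {1..<k - j} \<longleftrightarrow> C = {j<..<k} \<or> C = {j..<k}"
  proof
    assume parts: "(\<forall>x\<in>C. j \<le> x) \<and> high_part j C = {1..<k - j}"
    have "C = {j<..<k} \<union> (C \<inter> {j})"
    proof
      show "{j<..<k} \<union> (C \<inter> {j}) \<subseteq> C"
      proof
        fix x assume x: "x \<in> {j<..<k} \<union> (C \<inter> {j})"
        have "x \<in> C" if "j < x" "x < k"
        proof -
          have "x - j \<in> high_part j C" using parts that by auto
          moreover have "j + (x - j) = x" using that by simp
          ultimately show ?thesis unfolding mem_high_part by simp
        qed
        then show "x \<in> C" using x by auto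
      qed
      show "C \<subseteq> {j<..<k} \<union> (C \<inter> {j})"
      proof
        fix x assume x: "x \<in> C"
        then have "j \<le> x" "x < k" using parts C by auto
        then show "x \<in> {j<..<k} \<union> (C \<inter> {j})" using x by (cases "x = j") auto
      qed
    qed
    then show "C = {j<..<k} \<or> C = {j..<k}"
      using j C by (cases "j \<in> C") auto
  next
    assume "C = {j<..<k} \<or> C = {j..<k}"
    then show "(\<forall>x\<in>C. j \<le> x) \<and> high_part j C = {1..<k - j}"
      by (auto simp: mem_high_part)
  qed
  finally show ?thesis .
qed

text \<open>The identity \<open>\<Sum>_j (-1)^j S_j \<Lambda>_{k-j} = 0\<close> for \<open>k \<ge> 1\<close>: at a descent set
  \<open>C = {t..<k}\<close> exactly the terms \<open>j = t - 1\<close> and \<open>j = t\<close> contribute, with opposite signs.\<close>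

lemma conv_signed_Sn_Lambda:
  assumes k: "1 \<le> k"
  shows "conv (\<lambda>j. scaleS ((-1)^j) (Sn j)) Lambda k = 0"
proof (rule eq_if_ribbon_coeffs_eq)
  show "conv (\<lambda>j. scaleS ((-1)^j) (Sn j)) Lambda k \<in> Sym_deg k"
    unfolding conv_def
    using mult_Sym_deg[OF Sym_deg_scale[OF Sn_in_Sym_deg] Lambda_in_Sym_deg]
    by (intro Sym_deg_sum) (metis atMost_iff le_add_diff_inverse)
  show "0 \<in> Sym_deg k" by (rule Sym_deg_zero)
next
  fix C assume C: "C \<subseteq> {1..<k}"
  define J where "J = {j\<in>{..k}. C = {j<..<k} \<or> C = {j..<k}}"
  have "ribbon_coeff k (conv (\<lambda>j. scaleS ((-1)^j) (Sn j)) Lambda k) C =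
      (\<Sum>j\<le>k. if C = {j<..<k} \<or> C = {j..<k} then (-1)^j else 0)"
    unfolding conv_def ribbon_coeff_sum
    by (intro sum.cong refl) (simp add: mult_scale_left ribbon_coeff_scale ribbon_coeff_Sn_Lambda[OF _ C])
  also have "\<dots> = (\<Sum>j\<in>J. (-1)^j)"
    unfolding J_def by (rule sum.inter_filter[symmetric]) simp
  also have "\<dots> = 0"
  proof (cases "C = {k - card C..<k}")
    case True
    define t where "t = k - card C"
    have Ct: "C = {t..<k}" using True by (simp add: t_def)
    have "t \<le> k" by (simp add: t_def)
    have "1 \<le> t"
    proof (cases "t < k")
      case True
      then have "t \<in> C" using Ct by simp
      then show ?thesis using C by auto
    qed (use \<open>t \<le> k\<close> k in simp)
    have "j \<in> J \<longleftrightarrow> j = t - 1 \<or> j = t" for j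
    proof
      assume "j \<in> J"
      then have "j \<le> k" "card C = card {j<..<k} \<or> card C = card {j..<k}"
        by (auto simp: J_def)
      then show "j = t - 1 \<or> j = t" using \<open>t \<le> k\<close> by (auto simp: t_def)
    next
      assume "j = t - 1 \<or> j = t"
      then show "j \<in> J"
        using Ct \<open>1 \<le> t\<close> \<open>t \<le> k\<close> by (auto simp: J_def greaterThanLessThan_eq)
    qed
    then have "J = {t - 1, t}" by auto
    then show ?thesis using \<open>1 \<le> t\<close> by (cases t) simp_all
  next
    case False
    have "{j<..<k} = {k - card {j<..<k}..<k}" "{j..<k} = {k - card {j..<k}..<k}" for j
      by auto
    then have "J = {}" using False by (auto simp: J_def)
    then show ?thesis by simp
  qed
  finally show "ribbon_coeff k (conv (\<lambda>j. scaleS ((-1)^j) (Sn j)) Lambda k) C = ribbon_coeff k 0 C"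
    by simp
qed

lemma Delta_signed_Sn:
  "Delta (scaleS ((-1)^n) (Sn n)) = tensor_conv (\<lambda>j. scaleS ((-1)^j) (Sn j)) n"
proof -
  have "Delta (scaleS ((-1)^n) (Sn n)) = (\<Sum>a\<le>n. scaleT ((-1)^n) (tensor (Sn a) (Sn (n - a))))"
    by (simp add: Delta_scale finsupp_Sym_deg[OF Sn_in_Sym_deg] Delta_Sn tensor_conv_def
        VT.scale_sum_right)
  also have "\<dots> = tensor_conv (\<lambda>j. scaleS ((-1)^j) (Sn j)) n"
    unfolding tensor_conv_def
    by (intro sum.cong refl) (auto simp: tensor_scale_left tensor_scale_right power_add[symmetric])
  finally show ?thesis .
qed

text \<open>By induction: \<open>\<Sum>_j (-1)^j S_j \<Lambda>_{k-j} = 0\<close> expresses \<open>Delta \<Lambda>_k\<close> through the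
  \<open>Delta \<Lambda>_i\<close> with \<open>i < k\<close> in the same way as \<open>tmult_tensor_conv\<close> expresses
  \<open>tensor_conv \<Lambda> k\<close>.\<close>

lemma Delta_Lambda: "Delta (Lambda k) = tensor_conv Lambda k"
proof (induction k rule: less_induct)
  case (less k)
  define \<sigma> :: "nat \<Rightarrow> sym" where "\<sigma> = (\<lambda>j. scaleS ((-1)^j) (Sn j))"
  define R where "R = (\<Sum>j<k. tmult (tensor_conv \<sigma> (Suc j)) (tensor_conv Lambda (k - Suc j)))"
  have \<sigma>0: "tensor_conv \<sigma> 0 = tensor one_sym one_sym"
    by (simp add: tensor_conv_def \<sigma>_def Sn_0)
  show ?case
  proof (cases "k = 0")
    case True
    then show ?thesis by (simp add: Lambda_0 Delta_one tensor_conv_def)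
  next
    case False
    then have zero: "conv \<sigma> Lambda p = 0" if "p \<noteq> 0" for p
      using conv_signed_Sn_Lambda that by (simp add: \<sigma>_def)
    have fin: "finsupp (\<sigma> j)" "finsupp (Lambda j)" for j
      by (simp_all add: \<sigma>_def finsupp_scale finsupp_Sym_deg[OF Sn_in_Sym_deg]
          finsupp_Sym_deg[OF Lambda_in_Sym_deg])
    have "0 = Delta (conv \<sigma> Lambda k)"
      using zero False by (simp add: Delta_eq_lin_ext lin_ext_def)
    also have "\<dots> = (\<Sum>j\<le>k. tmult (tensor_conv \<sigma> j) (Delta (Lambda (k - j))))"
      by (simp only: Delta_conv[OF fin]) (simp add: Delta_signed_Sn \<sigma>_def)
    also have "\<dots> = Delta (Lambda k) + R"
      using less False by (simp add: sum.atMost_shift \<sigma>0 tmult_one_left R_def)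
    finally have "Delta (Lambda k) + R = 0" by simp
    moreover have "tensor_conv (conv \<sigma> Lambda) k = 0"
      unfolding tensor_conv_def
    proof (rule sum.neutral, rule ballI)
      fix p assume "p \<in> {..k}"
      show "tensor (conv \<sigma> Lambda p) (conv \<sigma> Lambda (k - p)) = 0"
        using zero False by (cases "p = 0") simp_all
    qed
    then have "tensor_conv Lambda k + R = 0"
      using tmult_tensor_conv[where n=k and u=\<sigma> and v=Lambda]
      by (simp add: sum.atMost_shift \<sigma>0 tmult_one_left R_def)
    ultimately have "Delta (Lambda k) + R = tensor_conv Lambda k + R" by simp
    then show ?thesis by simp
  qed
qed

lemma tildeS_eq_conv: "tildeS = conv Lambda Sn"
  by (simp add: fun_eq_iff tildeS_def conv_def)

lemma Delta_tildeS: "Delta (tildeS n) = tensor_conv tildeS n"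
proof -
  have "Delta (tildeS n) = (\<Sum>k\<le>n. tmult (tensor_conv Lambda k) (tensor_conv Sn (n - k)))"
    unfolding tildeS_eq_conv
    by (simp add: Delta_conv finsupp_Sym_deg[OF Sn_in_Sym_deg] finsupp_Sym_deg[OF Lambda_in_Sym_deg]
        Delta_Lambda Delta_Sn)
  then show ?thesis by (simp add: tmult_tensor_conv tildeS_eq_conv)
qed

lemma tensor_in_tensor_sq: "u \<in> V \<Longrightarrow> v \<in> V \<Longrightarrow> tensor u v \<in> tensor_sq V"
  unfolding tensor_sq_def by (rule VT.span_base) blast

lemma tmult_in_tensor_sq:
  assumes mult_closed: "\<And>u v. u \<in> V \<Longrightarrow> v \<in> V \<Longrightarrow> mult u v \<in> V"
    and X: "X \<in> tensor_sq V" and Y: "Y \<in> tensor_sq V"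
  shows "tmult X Y \<in> tensor_sq V"
proof -
  have tensor_left: "tmult (tensor u v) Y \<in> tensor_sq V" if "u \<in> V" "v \<in> V" for u v
    using Y unfolding tensor_sq_def
  proof (induction rule: VT.span_induct_alt)
    case (step c y Z)
    then obtain u' v' where "y = tensor u' v'" "u' \<in> V" "v' \<in> V" by blast
    then have "tmult (tensor u v) y \<in> tensor_sq V"
      using that mult_closed by (simp add: tmult_tensor tensor_in_tensor_sq)
    moreover have "tmult (tensor u v) (scaleT c y + Z) = scaleT c (tmult (tensor u v) y) + tmult (tensor u v) Z"
      by (simp only: tmult_add_right tmult_scale_right)
    ultimately show ?case
      using step.IH unfolding tensor_sq_def by (simp only:) (intro VT.span_add VT.span_scale)
  qed (simp only: tmult_zero_left tmult_zero_right VT.span_zero)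
  show ?thesis
    using X unfolding tensor_sq_def
  proof (induction rule: VT.span_induct_alt)
    case (step c x Z)
    then obtain u v where "x = tensor u v" "u \<in> V" "v \<in> V" by blast
    then have "tmult x Y \<in> tensor_sq V" using tensor_left by simp
    moreover have "tmult (scaleT c x + Z) Y = scaleT c (tmult x Y) + tmult Z Y"
      by (simp only: tmult_add_left tmult_scale_left)
    ultimately show ?case
      using step.IH unfolding tensor_sq_def by (simp only:) (intro VT.span_add VT.span_scale)
  qed (simp only: tmult_zero_left tmult_zero_right VT.span_zero)
qed

theorem Delta_in_tensor_sq_Pall:
  assumes "F \<in> Pall" shows "Delta F \<in> tensor_sq Pall"
proof -
  have tildeS: "tildeS n \<in> Pall" for n
  proof -
    have "theta (Sn n) \<in> theta ` Sym" using Sn_in_Sym_deg Sym_deg_subset_Sym by blast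
    then show ?thesis by (simp only: theta_Sn theta_image_Sym_eq_Pall)
  qed
  have thetaS: "Delta (thetaS I) \<in> tensor_sq Pall" for I
  proof (induct I)
    case Nil
    then show ?case by (simp add: thetaS_Nil Delta_one tensor_in_tensor_sq one_in_Pall)
  next
    case (Cons i I)
    have "Delta (tildeS i) \<in> tensor_sq Pall"
      unfolding Delta_tildeS tensor_conv_def tensor_sq_def
      by (intro VT.span_sum VT.span_base) (blast intro: tildeS)
    then show ?case
      using Cons mult_in_Pall
      by (simp add: thetaS_Cons Delta_mult finsupp_Sym_deg[OF tildeS_in_Sym_deg]
          finsupp_Sym_deg[OF thetaS_in_Sym_deg] tmult_in_tensor_sq)
  qed
  obtain G where G: "G \<in> Sym" "F = theta G"
    using assms unfolding theta_image_Sym_eq_Pall[symmetric] by blast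
  have "Delta F = (\<Sum>I\<in>{I. G I \<noteq> 0}. scaleT (G I) (Delta (thetaS I)))"
    using G finsupp_Sym[OF G(1)]
    by (simp add: theta_expansion Delta_sum Delta_scale finsupp_scale finsupp_Sym_deg[OF thetaS_in_Sym_deg])
  also have "\<dots> \<in> tensor_sq Pall"
    unfolding tensor_sq_def using thetaS by (intro VT.span_sum VT.span_scale) (simp add: tensor_sq_def)
  finally show ?thesis .
qed

theorem mainTheorem1:
  shows "(\<forall>n. theta ` Sym_deg n = Pspace n)
    \<and> theta ` Sym = Pall
    \<and> one_sym \<in> Pall
    \<and> (\<forall>F\<in>Pall. \<forall>G\<in>Pall. mult F G \<in> Pall)
    \<and> (\<forall>F\<in>Pall. Delta F \<in> tensor_sq Pall)
    \<and> (\<forall>n. vector_space.dim scaleS (Pspace n) = fib_f n)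
    \<and> (\<forall>n\<ge>1. card {I \<in> comps n. \<forall>i\<in>set I. odd i} = fib_f n)"
  using theta_image_eq_Pspace theta_image_Sym_eq_Pall one_in_Pall mult_in_Pall
    Delta_in_tensor_sq_Pall dim_Pspace_eq_card card_peak_sets card_odd_comps
  by (simp add: odd_comps_def)

end
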